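(* Let $(\pi,\sigma)$ be a commutant pair of projective unitary representations of a countable group $G$ on a Hilbert space $H$ such that the set $\mathcal{B}_\pi$ of Bessel vectors of $\pi$ is dense in $H$. Let $\xi_i,\eta_i\in H$ ($i=1,\dots,k$) be Bessel vectors for $\pi$, and $\vec\xi=(\xi_1,\dots,\xi_k)$, $\vec\eta=(\eta_1,\dots,\eta_k)$. If $[\Theta_{\vec\xi,\pi}(H)]=[\Theta_{\vec\eta,\pi}(H)]$, then $[\sigma^{(k)}(G)\vec\xi\,]=[\sigma^{(k)}(G)\vec\eta\,]$.
   Context: A projective unitary representation of $G$ on $H$ is a map $g\mapsto\pi(g)$ into unitaries with $\pi(g)\pi(h)=\mu(g,h)\pi(gh)$, $\mu:G\times G\to\mathbb{T}$. $\xi$ is a Bessel vector for $\pi$ if $\{\pi(g)\xi\}_{g\in G}$ is a Bessel sequence. $(\pi,\sigma)$ is a commutant pair if $\pi(G)'=\sigma(G)''$. For $\xi\in H$, $\Theta_{\xi,\pi}(x)=\sum_{g}\langle x,\pi(g)\xi\rangle\chi_g\in\ell^2(G)$, and $\Theta_{\vec\xi,\pi}(x)=\Theta_{\xi_1,\pi}(x)\oplus\cdots\oplus\Theta_{\xi_k,\pi}(x)\in\ell^2(G)^{(k)}$. $\sigma^{(k)}(g)=\sigma(g)\oplus\cdots\oplus\sigma(g)$ acts on $H^{(k)}$, the direct sum of $k$ copies of $H$. $[K]$ denotes the closed linear span of $K$. *)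

theory Defs
  imports "HOL-Analysis.Analysis" "HOL-Algebra.Group"
begin

text \<open>Together with the class
  complete_space this gives a complex Hilbert space whose norm and topology are those
  induced by the complex inner product.\<close>

class complex_inner = real_inner +
  fixes scaleC :: "complex \<Rightarrow> 'a \<Rightarrow> 'a"
    and cinner :: "'a \<Rightarrow> 'a \<Rightarrow> complex"
  assumes scaleC_add_right: "scaleC a (x + y) = scaleC a x + scaleC a y"
    and scaleC_add_left: "scaleC (a + b) x = scaleC a x + scaleC b x"
    and scaleC_scaleC: "scaleC a (scaleC b x) = scaleC (a * b) x"
    and scaleC_one: "scaleC 1 x = x"
    and scaleR_scaleC: "scaleR r x = scaleC (complex_of_real r) x"
    and cinner_add_left: "cinner (x + y) z = cinner x z + cinner y z"
    and cinner_scaleC_left: "cinner (scaleC a x) y = a * cinner x y"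
    and cinner_commute: "cinner y x = cnj (cinner x y)"
    and inner_cinner: "inner x y = Re (cinner x y)"

instantiation complex :: complex_inner
begin
definition scaleC_complex :: "complex \<Rightarrow> complex \<Rightarrow> complex" where
  "scaleC_complex a x = a * x"
definition cinner_complex :: "complex \<Rightarrow> complex \<Rightarrow> complex" where
  "cinner_complex x y = x * cnj y"
instance
  by standard (auto simp: scaleC_complex_def cinner_complex_def algebra_simps
      scaleR_conv_of_real inner_complex_def)
end

definition clinear :: "('h::complex_inner \<Rightarrow> 'h) \<Rightarrow> bool" where
  "clinear T \<longleftrightarrow> (\<forall>x y. T (x + y) = T x + T y) \<and> (\<forall>a x. T (scaleC a x) = scaleC a (T x))"

definition bounded_clinear_op :: "('h::complex_inner \<Rightarrow> 'h) \<Rightarrow> bool" where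
  "bounded_clinear_op T \<longleftrightarrow> clinear T \<and> (\<exists>K. \<forall>x. norm (T x) \<le> norm x * K)"

definition unitary_op :: "('h::complex_inner \<Rightarrow> 'h) \<Rightarrow> bool" where
  "unitary_op U \<longleftrightarrow> clinear U \<and> surj U \<and> (\<forall>x y. cinner (U x) (U y) = cinner x y)"

definition commutant :: "('h::complex_inner \<Rightarrow> 'h) set \<Rightarrow> ('h \<Rightarrow> 'h) set" where
  "commutant S = {T. bounded_clinear_op T \<and> (\<forall>s\<in>S. T \<circ> s = s \<circ> T)}"

definition proj_unitary_rep :: "('g, 'b) monoid_scheme \<Rightarrow> ('g \<Rightarrow> 'h::complex_inner \<Rightarrow> 'h) \<Rightarrow> bool" where
  "proj_unitary_rep G \<pi> \<longleftrightarrow>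
     (\<forall>g\<in>carrier G. unitary_op (\<pi> g)) \<and>
     (\<exists>\<mu> :: 'g \<Rightarrow> 'g \<Rightarrow> complex. \<forall>g\<in>carrier G. \<forall>h\<in>carrier G.
        cmod (\<mu> g h) = 1 \<and> \<pi> g \<circ> \<pi> h = (\<lambda>x. scaleC (\<mu> g h) (\<pi> (g \<otimes>\<^bsub>G\<^esub> h) x)))"

definition commutant_pair :: "('g, 'b) monoid_scheme \<Rightarrow> ('g \<Rightarrow> 'h::complex_inner \<Rightarrow> 'h) \<Rightarrow> ('g \<Rightarrow> 'h \<Rightarrow> 'h) \<Rightarrow> bool" where
  "commutant_pair G \<pi> \<sigma> \<longleftrightarrow> commutant (\<pi> ` carrier G) = commutant (commutant (\<sigma> ` carrier G))"

definition bessel_vector :: "('g, 'b) monoid_scheme \<Rightarrow> ('g \<Rightarrow> 'h::complex_inner \<Rightarrow> 'h) \<Rightarrow> 'h \<Rightarrow> bool" where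
  "bessel_vector G \<pi> \<xi> \<longleftrightarrow> (\<exists>B. \<forall>x.
     (\<lambda>g. (cmod (cinner x (\<pi> g \<xi>)))\<^sup>2) summable_on carrier G \<and>
     (\<Sum>\<^sub>\<infinity>g\<in>carrier G. (cmod (cinner x (\<pi> g \<xi>)))\<^sup>2) \<le> B * (norm x)\<^sup>2)"

text \<open>Elements of \<open>\<ell>\<^sup>2(G)\<^sup>(\<^sup>k\<^sup>)\<close> are represented as functions \<open>f i g\<close> with \<open>i < k\<close>,
  \<open>g \<in> carrier G\<close> (zero elsewhere), each row square-summable.\<close>
definition l2k :: "nat \<Rightarrow> ('g, 'b) monoid_scheme \<Rightarrow> (nat \<Rightarrow> 'g \<Rightarrow> complex) \<Rightarrow> bool" where
  "l2k k G f \<longleftrightarrow> (\<forall>i g. (i \<ge> k \<or> g \<notin> carrier G) \<longrightarrow> f i g = 0) \<and>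
     (\<forall>i<k. (\<lambda>g. (cmod (f i g))\<^sup>2) summable_on carrier G)"

definition l2k_dist2 :: "nat \<Rightarrow> ('g, 'b) monoid_scheme \<Rightarrow> (nat \<Rightarrow> 'g \<Rightarrow> complex) \<Rightarrow> (nat \<Rightarrow> 'g \<Rightarrow> complex) \<Rightarrow> real" where
  "l2k_dist2 k G f h = (\<Sum>i<k. \<Sum>\<^sub>\<infinity>g\<in>carrier G. (cmod (f i g - h i g))\<^sup>2)"

definition l2k_span :: "(nat \<Rightarrow> 'g \<Rightarrow> complex) set \<Rightarrow> (nat \<Rightarrow> 'g \<Rightarrow> complex) set" where
  "l2k_span S = {(\<lambda>i g. \<Sum>v\<in>A. c v * v i g) | A c. finite A \<and> A \<subseteq> S}"

definition l2k_closed_span :: "nat \<Rightarrow> ('g, 'b) monoid_scheme \<Rightarrow> (nat \<Rightarrow> 'g \<Rightarrow> complex) set \<Rightarrow> (nat \<Rightarrow> 'g \<Rightarrow> complex) set" where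
  "l2k_closed_span k G S = {f. l2k k G f \<and> (\<forall>e>0. \<exists>h\<in>l2k_span S. l2k_dist2 k G f h < e)}"

definition Theta_vec :: "nat \<Rightarrow> ('g, 'b) monoid_scheme \<Rightarrow> ('g \<Rightarrow> 'h::complex_inner \<Rightarrow> 'h) \<Rightarrow> (nat \<Rightarrow> 'h) \<Rightarrow> 'h \<Rightarrow> (nat \<Rightarrow> 'g \<Rightarrow> complex)" where
  "Theta_vec k G \<pi> \<xi> x = (\<lambda>i g. if i < k \<and> g \<in> carrier G then cinner x (\<pi> g (\<xi> i)) else 0)"

text \<open>Elements of \<open>H\<^sup>(\<^sup>k\<^sup>)\<close> are functions \<open>v :: nat \<Rightarrow> 'h\<close> with \<open>v i = 0\<close> for \<open>i \<ge> k\<close>.\<close>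
definition Hk_span :: "(nat \<Rightarrow> 'h::complex_inner) set \<Rightarrow> (nat \<Rightarrow> 'h) set" where
  "Hk_span S = {(\<lambda>i. \<Sum>v\<in>A. scaleC (c v) (v i)) | A c. finite A \<and> A \<subseteq> S}"

definition Hk_closed_span :: "nat \<Rightarrow> (nat \<Rightarrow> 'h::complex_inner) set \<Rightarrow> (nat \<Rightarrow> 'h) set" where
  "Hk_closed_span k S = {v. (\<forall>i\<ge>k. v i = 0) \<and>
     (\<forall>e>0. \<exists>w\<in>Hk_span S. (\<Sum>i<k. (norm (v i - w i))\<^sup>2) < e)}"

definition rep_k :: "nat \<Rightarrow> ('g \<Rightarrow> 'h::complex_inner \<Rightarrow> 'h) \<Rightarrow> 'g \<Rightarrow> (nat \<Rightarrow> 'h) \<Rightarrow> (nat \<Rightarrow> 'h)" where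
  "rep_k k \<sigma> g v = (\<lambda>i. if i < k then \<sigma> g (v i) else 0)"

end

theory Submission
  imports Defs
begin

text \<open>Let \<open>P\<close> be the orthogonal projection of \<open>H\<^sup>(\<^sup>k\<^sup>)\<close> onto \<open>[\<sigma>\<^sup>(\<^sup>k\<^sup>)(G) \<eta>]\<close>. It commutes with
  \<open>\<sigma>\<^sup>(\<^sup>k\<^sup>)(G)\<close>, so the matrix entries \<open>Q\<^sub>i\<^sub>j\<close> of \<open>I - P\<close> lie in \<open>\<sigma>(G)' = \<pi>(G)''\<close> and commute with
  \<open>\<pi>(G)'\<close>, which contains \<open>\<Theta>\<^sub>y\<^sup>* \<Theta>\<^sub>x\<close> for all Bessel vectors \<open>x\<close>, \<open>y\<close>. Hence
  \<open>\<Theta>\<^sub>y\<^sup>* \<Theta>\<^sub>x (\<Sum>\<^sub>j Q\<^sub>i\<^sub>j \<zeta>\<^sub>j)\<close> is a bounded linear function of \<open>\<Theta>\<^sub>\<zeta>(x) \<in> \<ell>\<^sup>2(G)\<^sup>(\<^sup>k\<^sup>)\<close>. It vanishes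
  for \<open>\<zeta> = \<eta>\<close> because \<open>\<eta>\<close> lies in the range of \<open>P\<close>; by density of the Bessel vectors and
  continuity it therefore vanishes on \<open>[\<Theta>\<^sub>\<eta>(H)] \<supseteq> \<Theta>\<^sub>\<xi>(H)\<close>. So \<open>w\<^sub>i = \<Sum>\<^sub>j Q\<^sub>i\<^sub>j \<xi>\<^sub>j\<close> satisfies
  \<open>\<Theta>\<^sub>x\<^sup>* \<Theta>\<^sub>x w\<^sub>i = 0\<close>, hence \<open>w\<^sub>i \<perp> x\<close> for every Bessel vector \<open>x\<close>, and \<open>w\<^sub>i = 0\<close>: \<open>\<xi>\<close> lies in the
  range of \<open>P\<close>. By symmetry the two cyclic subspaces coincide.\<close>

section \<open>Complex inner product spaces\<close>

lemma cinner_add_right: "cinner x (y + z) = cinner x y + cinner x z"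
  by (metis cinner_commute cinner_add_left complex_cnj_add)

lemma cinner_scaleC_right: "cinner x (scaleC a y) = cnj a * cinner x y"
  by (metis cinner_commute cinner_scaleC_left complex_cnj_mult)

lemma scaleC_zero_right [simp]: "scaleC a (0::'a::complex_inner) = 0"
proof -
  have "scaleC a (0::'a) = scaleC a 0 + scaleC a 0"
    by (metis add.right_neutral scaleC_add_right)
  then show ?thesis by simp
qed

lemma scaleC_zero_left [simp]: "scaleC 0 (x::'a::complex_inner) = 0"
  by (metis of_real_0 scaleR_scaleC scaleR_zero_left)

lemma scaleC_minus_right: "scaleC a (- x) = - scaleC a (x::'a::complex_inner)"
  by (metis add.right_inverse add_eq_0_iff2 scaleC_add_right scaleC_zero_right)

lemma scaleC_diff_right: "scaleC a (x - y) = scaleC a x - scaleC a (y::'a::complex_inner)"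
  by (metis diff_conv_add_uminus scaleC_add_right scaleC_minus_right)

lemma scaleC_minus_left: "scaleC (- a) x = - scaleC a (x::'a::complex_inner)"
  by (metis add.right_inverse add_eq_0_iff2 scaleC_add_left scaleC_zero_left)

lemma scaleC_diff_left: "scaleC (a - b) x = scaleC a x - scaleC b (x::'a::complex_inner)"
  by (metis diff_conv_add_uminus scaleC_add_left scaleC_minus_left)

lemma cinner_zero_left [simp]: "cinner 0 y = 0"
  by (metis add_cancel_right_right cinner_add_left)

lemma cinner_minus_left: "cinner (- x) y = - cinner x y"
  by (metis add.right_inverse add_eq_0_iff2 cinner_add_left cinner_zero_left)

lemma cinner_minus_right: "cinner x (- y) = - cinner x y"
  by (metis cinner_commute cinner_minus_left complex_cnj_minus)

lemma cinner_diff_left: "cinner (x - y) z = cinner x z - cinner y z"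
  by (metis diff_conv_add_uminus cinner_add_left cinner_minus_left)

lemma cinner_diff_right: "cinner x (y - z) = cinner x y - cinner x z"
  by (metis diff_conv_add_uminus cinner_add_right cinner_minus_right)

lemma cinner_sum_left: "cinner (\<Sum>i\<in>A. f i) y = (\<Sum>i\<in>A. cinner (f i) y)"
  by (induction A rule: infinite_finite_induct) (auto simp: cinner_add_left)

lemma scaleC_sum_right: "scaleC a (\<Sum>i\<in>A. f i) = (\<Sum>i\<in>A. scaleC a (f i :: 'a::complex_inner))"
  by (induction A rule: infinite_finite_induct) (auto simp: scaleC_add_right)

lemma scaleC_sum_left: "scaleC (\<Sum>i\<in>A. c i) x = (\<Sum>i\<in>A. scaleC (c i) (x :: 'a::complex_inner))"
  by (induction A rule: infinite_finite_induct) (auto simp: scaleC_add_left)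

lemma cinner_self: "cinner x x = complex_of_real ((norm x)\<^sup>2)"
proof -
  have "cinner x x = cnj (cinner x x)" using cinner_commute by metis
  then have "Im (cinner x x) = 0" by (metis Reals_cnj_iff complex_is_Real_iff)
  moreover have "Re (cinner x x) = (norm x)\<^sup>2"
    by (metis inner_cinner power2_norm_eq_inner)
  ultimately show ?thesis by (simp add: complex_eq_iff)
qed

lemma norm_scaleC: "norm (scaleC a x) = cmod a * norm (x::'a::complex_inner)"
proof -
  have "cinner (scaleC a x) (scaleC a x) = a * cnj a * cinner x x"
    by (simp add: cinner_scaleC_left cinner_scaleC_right mult.assoc)
  also have "\<dots> = complex_of_real ((cmod a * norm x)\<^sup>2)"
  proof -
    have "a * cnj a = complex_of_real ((cmod a)\<^sup>2)" using complex_norm_square[of a] by simp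
    then show ?thesis by (simp add: cinner_self power_mult_distrib)
  qed
  finally have "(norm (scaleC a x))\<^sup>2 = (cmod a * norm x)\<^sup>2"
    unfolding cinner_self using of_real_eq_iff by blast
  then show ?thesis by (simp add: power2_eq_iff_nonneg)
qed

lemma scaleC_scaleR_commute: "scaleC a (scaleR r x) = scaleR r (scaleC a (x::'a::complex_inner))"
  by (simp add: scaleR_scaleC scaleC_scaleC mult.commute)

lemma cmod_cinner_le: "cmod (cinner x y) \<le> norm x * norm y"
proof (cases "cinner x y = 0")
  case True then show ?thesis by simp
next
  case False
  define c where "c = cinner x y"
  define u where "u = scaleC (cnj c / complex_of_real (cmod c)) x"
  have "cinner u y = cnj c / complex_of_real (cmod c) * c"
    by (simp add: u_def cinner_scaleC_left c_def)
  also have "\<dots> = (c * cnj c) / complex_of_real (cmod c)" by simp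
  also have "\<dots> = complex_of_real (cmod c)"
    using False unfolding c_def complex_norm_square[symmetric]
    by (simp add: power2_eq_square)
  finally have "inner u y = cmod c" by (simp add: inner_cinner)
  moreover have "inner u y \<le> norm u * norm y" by (rule norm_cauchy_schwarz)
  moreover have "norm u = norm x"
    using False unfolding u_def c_def by (simp add: norm_scaleC norm_divide)
  ultimately show ?thesis unfolding c_def by simp
qed

lemma bounded_linear_scaleC: "bounded_linear (scaleC a :: 'a::complex_inner \<Rightarrow> 'a)"
  by (rule bounded_linear_intro[where K="cmod a"])
     (auto simp: scaleC_add_right scaleC_scaleR_commute norm_scaleC mult.commute)

lemma bounded_linear_cinner_left: "bounded_linear (\<lambda>x. cinner x y)"
proof (rule bounded_linear_intro[where K="norm y"])
  show "cinner (scaleR r x) y = scaleR r (cinner x y)" for r x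
    by (simp add: scaleR_scaleC[of r x] cinner_scaleC_left scaleR_conv_of_real)
qed (auto simp: cinner_add_left cmod_cinner_le)

lemma norm_add_square_cinner:
  fixes x y :: "'h::complex_inner"
  shows "(norm (x + y))\<^sup>2 = (norm x)\<^sup>2 + (norm y)\<^sup>2 + 2 * Re (cinner x y)"
proof -
  have "Re (cinner (x + y) (x + y)) = Re (cinner x x) + Re (cinner y y) + Re (cinner x y) + Re (cinner y x)"
    by (simp add: cinner_add_left cinner_add_right)
  moreover have "Re (cinner y x) = Re (cinner x y)" by (simp add: cinner_commute[of y x])
  ultimately show ?thesis by (simp add: cinner_self)
qed

lemma norm_diff_scaleC_square:
  fixes x y :: "'h::complex_inner"
  shows "(norm (x - scaleC a y))\<^sup>2 = (norm x)\<^sup>2 - 2 * Re (cnj a * cinner x y) + (cmod a)\<^sup>2 * (norm y)\<^sup>2"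
  using norm_add_square_cinner[of x "- scaleC a y"]
  by (simp add: cinner_minus_right cinner_scaleC_right norm_scaleC power_mult_distrib)

lemma parallelogram_law:
  fixes x y :: "'h::complex_inner"
  shows "(norm (x + y))\<^sup>2 + (norm (x - y))\<^sup>2 = 2 * (norm x)\<^sup>2 + 2 * (norm y)\<^sup>2"
  by (simp add: power2_norm_eq_inner inner_add_left inner_add_right inner_diff_left inner_diff_right inner_commute[of y x])

lemma eq_0_if_orthogonal_to_dense:
  fixes w :: "'h::complex_inner"
  assumes D: "closure D = UNIV" and orth: "\<And>x. x \<in> D \<Longrightarrow> cinner w x = 0"
  shows "w = 0"
proof (rule ccontr)
  assume "w \<noteq> 0"
  then have pos: "norm w > 0" by simp
  have "w \<in> closure D" using D by simp
  then obtain x where x: "x \<in> D" "dist x w < norm w / 2"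
    using pos closure_approachable[of w D] by (metis half_gt_zero)
  have "(norm w)\<^sup>2 = cmod (cinner w w - cinner w x)"
    using orth[OF x(1)] by (simp add: cinner_self norm_power)
  also have "\<dots> = cmod (cinner w (w - x))" by (simp add: cinner_diff_right)
  also have "\<dots> \<le> norm w * norm (w - x)" by (rule cmod_cinner_le)
  also have "\<dots> \<le> norm w * (norm w / 2)"
    using x(2) by (intro mult_left_mono) (auto simp: dist_norm norm_minus_commute)
  finally have "norm w * norm w \<le> norm w * (norm w / 2)" by (simp add: power2_eq_square)
  with pos show False by simp
qed

lemma eq_0_if_norm_le_all_pos:
  fixes z :: "'a::real_normed_vector"
  assumes K: "0 \<le> K" and le: "\<And>e. e > 0 \<Longrightarrow> norm z \<le> K * e"
  shows "z = 0"
proof -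
  have "norm z \<le> 0 + e" if "e > 0" for e
  proof -
    have "e / (K + 1) > 0" using K that by (simp add: add_nonneg_pos)
    then have "norm z \<le> K * (e / (K + 1))" by (rule le)
    also have "\<dots> \<le> e" using K that by (simp add: field_simps)
    finally show ?thesis by simp
  qed
  then have "norm z \<le> 0" by (rule field_le_epsilon)
  then show ?thesis by simp
qed

lemma clinear_add: "clinear T \<Longrightarrow> T (x + y) = T x + T y"
  by (simp add: clinear_def)

lemma clinear_scaleC: "clinear T \<Longrightarrow> T (scaleC a x) = scaleC a (T x)"
  by (simp add: clinear_def)

lemma clinear_zero: "clinear T \<Longrightarrow> T 0 = 0"
  by (metis clinear_scaleC scaleC_zero_left)

lemma clinear_minus: "clinear T \<Longrightarrow> T (- x) = - T x"
  by (metis add_eq_0_iff2 clinear_add clinear_zero add.right_inverse)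

lemma clinear_diff: "clinear T \<Longrightarrow> T (x - y) = T x - T y"
  by (metis diff_conv_add_uminus clinear_add clinear_minus)

lemma clinear_sum: "clinear T \<Longrightarrow> T (\<Sum>i\<in>A. f i) = (\<Sum>i\<in>A. T (f i))"
  by (induction A rule: infinite_finite_induct) (auto simp: clinear_add clinear_zero)

lemma clinear_scaleC_comp:
  assumes "clinear T" shows "clinear (\<lambda>x. scaleC a (T x))"
  using assms by (simp add: clinear_def scaleC_add_right scaleC_scaleC mult.commute)

lemma unitary_op_clinear: "unitary_op U \<Longrightarrow> clinear U"
  by (simp add: unitary_op_def)

lemma unitary_op_cinner: "unitary_op U \<Longrightarrow> cinner (U x) (U y) = cinner x y"
  by (simp add: unitary_op_def)

lemma unitary_op_norm: "unitary_op U \<Longrightarrow> norm (U x) = norm x"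
proof -
  assume U: "unitary_op U"
  have "complex_of_real ((norm (U x))\<^sup>2) = complex_of_real ((norm x)\<^sup>2)"
    using unitary_op_cinner[OF U, of x x] by (simp add: cinner_self)
  then have "(norm (U x))\<^sup>2 = (norm x)\<^sup>2" using of_real_eq_iff by blast
  then show ?thesis by (simp add: power2_eq_iff_nonneg)
qed

lemma unitary_op_inj: "unitary_op U \<Longrightarrow> inj U"
proof (rule injI)
  fix x y assume U: "unitary_op U" and e: "U x = U y"
  have "U (x - y) = 0" using e clinear_diff[OF unitary_op_clinear[OF U]] by simp
  then have "norm (x - y) = 0" using unitary_op_norm[OF U, of "x - y"] by simp
  then show "x = y" by simp
qed

lemma bounded_clinear_opI:
  "clinear T \<Longrightarrow> (\<And>x. norm (T x) \<le> norm x * K) \<Longrightarrow> bounded_clinear_op T"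
  unfolding bounded_clinear_op_def by blast

lemma bounded_linear_if_clinear:
  assumes "clinear T" "\<And>x. norm (T x) \<le> norm x * K" shows "bounded_linear T"
  by (rule bounded_linear_intro[where K=K])
     (auto simp: assms clinear_add scaleR_scaleC clinear_scaleC)

lemma unitary_op_bounded_linear: "unitary_op U \<Longrightarrow> bounded_linear U"
  by (rule bounded_linear_if_clinear[where K=1]) (auto simp: unitary_op_clinear unitary_op_norm)

lemma commutant_memI:
  "bounded_clinear_op T \<Longrightarrow> (\<And>s x. s \<in> S \<Longrightarrow> T (s x) = s (T x)) \<Longrightarrow> T \<in> commutant S"
  unfolding commutant_def by (auto simp: fun_eq_iff)

lemma commutant_commute: "T \<in> commutant S \<Longrightarrow> s \<in> S \<Longrightarrow> T (s x) = s (T x)"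
  unfolding commutant_def by (metis (mono_tags, lifting) comp_apply mem_Collect_eq)

section \<open>Infinite sums and Bessel families\<close>

lemma infsum_bounded_linear_apply:
  assumes "bounded_linear h" "f summable_on A"
  shows "infsum (\<lambda>x. h (f x)) A = h (infsum f A)"
  using has_sum_bounded_linear[OF assms(1) has_sum_infsum[OF assms(2)]] infsumI by blast

lemma infsum_scaleC_right:
  fixes f :: "_ \<Rightarrow> 'h::complex_inner"
  assumes "f summable_on A"
  shows "infsum (\<lambda>x. scaleC a (f x)) A = scaleC a (infsum f A)"
  using infsum_bounded_linear_apply[OF bounded_linear_scaleC assms] .

lemma summable_on_scaleC_right:
  fixes f :: "_ \<Rightarrow> 'h::complex_inner"
  assumes "f summable_on A"
  shows "(\<lambda>x. scaleC a (f x)) summable_on A"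
  using summable_on_bounded_linear[OF bounded_linear_scaleC assms] .

lemma infsum_diff:
  fixes f g :: "'a \<Rightarrow> 'b::real_normed_vector"
  assumes "f summable_on A" "g summable_on A"
  shows "infsum (\<lambda>x. f x - g x) A = infsum f A - infsum g A"
  using infsum_add[OF assms(1) summable_on_uminus[THEN iffD2, OF assms(2)]] infsum_uminus[of g A] by simp

lemma summable_on_finite_sum:
  fixes f :: "'i \<Rightarrow> 'a \<Rightarrow> 'b::real_normed_vector"
  assumes "\<And>i. i \<in> S \<Longrightarrow> f i summable_on A"
  shows "(\<lambda>x. \<Sum>i\<in>S. f i x) summable_on A"
  using assms by (induction S rule: infinite_finite_induct) (auto intro: summable_on_add)

lemma infsum_finite_sum:
  fixes f :: "'i \<Rightarrow> 'a \<Rightarrow> 'b::real_normed_vector"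
  assumes "\<And>i. i \<in> S \<Longrightarrow> f i summable_on A"
  shows "infsum (\<lambda>x. \<Sum>i\<in>S. f i x) A = (\<Sum>i\<in>S. infsum (f i) A)"
  using assms
  by (induction S rule: infinite_finite_induct) (auto simp: infsum_add summable_on_finite_sum)

lemma norm_infsum_le_if_finite_sums_le:
  fixes f :: "'a \<Rightarrow> 'b::real_normed_vector"
  assumes "f summable_on A" "\<And>F. finite F \<Longrightarrow> F \<subseteq> A \<Longrightarrow> norm (sum f F) \<le> b"
  shows "norm (infsum f A) \<le> b"
proof -
  have "((\<lambda>F. norm (sum f F)) \<longlongrightarrow> norm (infsum f A)) (finite_subsets_at_top A)"
    using has_sum_infsum[OF assms(1)] unfolding has_sum_def by (intro tendsto_norm)
  then show ?thesis
    by (rule tendsto_upperbound) (use assms(2) finite_subsets_at_top_neq_bot in auto)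
qed

lemma summable_on_if_tails_small:
  fixes f :: "'a \<Rightarrow> 'b::{real_normed_vector,complete_space}"
  assumes tails: "\<And>e. e > 0 \<Longrightarrow>
    \<exists>F0. finite F0 \<and> F0 \<subseteq> A \<and> (\<forall>F. finite F \<and> F \<subseteq> A - F0 \<longrightarrow> norm (sum f F) < e)"
  shows "f summable_on A"
proof -
  have "\<exists>P. eventually P (finite_subsets_at_top A) \<and> (\<forall>F F'. P F \<and> P F' \<longrightarrow> dist (sum f F) (sum f F') < e)"
    if "e > 0" for e
  proof -
    obtain F0 where F0: "finite F0" "F0 \<subseteq> A"
      and small: "\<And>F. finite F \<Longrightarrow> F \<subseteq> A - F0 \<Longrightarrow> norm (sum f F) < e / 2"
      using tails[of "e / 2"] \<open>e > 0\<close> by auto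
    define P where "P F \<longleftrightarrow> finite F \<and> F0 \<subseteq> F \<and> F \<subseteq> A" for F
    have "eventually P (finite_subsets_at_top A)"
      unfolding eventually_finite_subsets_at_top P_def using F0 by (intro exI[of _ F0]) auto
    moreover have "dist (sum f F) (sum f F') < e" if "P F" "P F'" for F F'
    proof -
      have fin: "finite F" "finite F'" using that unfolding P_def by auto
      have "sum f F = sum f (F - F') + sum f (F \<inter> F')"
        using fin by (metis add.commute sum.Int_Diff)
      moreover have "sum f F' = sum f (F' - F) + sum f (F \<inter> F')"
        using fin by (metis add.commute inf_commute sum.Int_Diff)
      ultimately have "dist (sum f F) (sum f F') = norm (sum f (F - F') - sum f (F' - F))"
        by (simp add: dist_norm)
      also have "\<dots> \<le> norm (sum f (F - F')) + norm (sum f (F' - F))"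
        by (rule norm_triangle_ineq4)
      also have "\<dots> < e / 2 + e / 2"
        by (intro add_strict_mono small) (use that fin in \<open>auto simp: P_def\<close>)
      finally show ?thesis by simp
    qed
    ultimately show ?thesis by blast
  qed
  then have "cauchy_filter (filtermap (sum f) (finite_subsets_at_top A))"
    by (simp add: cauchy_filter_metric_filtermap)
  moreover have "complete (UNIV::'b set)"
    by (meson Cauchy_convergent UNIV_I complete_def convergent_def)
  ultimately obtain L where "(sum f \<longlongrightarrow> L) (finite_subsets_at_top A)"
    using complete_uniform[where S=UNIV] by (force simp add: filterlim_def)
  then show ?thesis
    using summable_on_def has_sum_def by blast
qed

lemma summable_on_tails_small:
  fixes f :: "'a \<Rightarrow> real"
  assumes f: "f summable_on A" and nonneg: "\<And>x. x \<in> A \<Longrightarrow> 0 \<le> f x" and "d > 0"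
  obtains F0 where "finite F0" "F0 \<subseteq> A" "\<And>F. finite F \<Longrightarrow> F \<subseteq> A - F0 \<Longrightarrow> sum f F \<le> d"
proof -
  obtain F0 where F0: "finite F0" "F0 \<subseteq> A" "dist (sum f F0) (infsum f A) \<le> d"
    using infsum_finite_approximation[OF f \<open>d > 0\<close>] by blast
  have "sum f F \<le> d" if "finite F" "F \<subseteq> A - F0" for F
  proof -
    have "sum f (F \<union> F0) \<le> infsum f A"
      by (rule finite_sum_le_infsum[OF f]) (use that F0 nonneg in auto)
    moreover have "sum f (F \<union> F0) = sum f F + sum f F0"
      by (rule sum.union_disjoint) (use that F0 in auto)
    ultimately show ?thesis using F0(3) unfolding dist_real_def by linarith
  qed
  with F0 show ?thesis using that by blast
qed

definition square_summable :: "('g \<Rightarrow> complex) \<Rightarrow> 'g set \<Rightarrow> bool" where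
  "square_summable a I \<longleftrightarrow> (\<lambda>g. (cmod (a g))\<^sup>2) summable_on I"

lemma square_summable_add:
  assumes "square_summable a I" "square_summable b I"
  shows "square_summable (\<lambda>g. a g + b g) I"
proof -
  have "(\<lambda>g. 2 * (cmod (a g))\<^sup>2 + 2 * (cmod (b g))\<^sup>2) summable_on I"
    using assms unfolding square_summable_def by (intro summable_on_add summable_on_cmult_right)
  moreover have "(cmod (a g + b g))\<^sup>2 \<le> 2 * (cmod (a g))\<^sup>2 + 2 * (cmod (b g))\<^sup>2" for g
  proof -
    have "(cmod (a g + b g))\<^sup>2 \<le> (cmod (a g) + cmod (b g))\<^sup>2"
      by (intro power_mono norm_triangle_ineq) simp
    also have "\<dots> \<le> 2 * (cmod (a g))\<^sup>2 + 2 * (cmod (b g))\<^sup>2"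
      using zero_le_power2[of "cmod (a g) - cmod (b g)"] by (simp add: power2_eq_square algebra_simps)
    finally show ?thesis .
  qed
  ultimately show ?thesis unfolding square_summable_def
    by (rule summable_on_comparison_test) auto
qed

lemma square_summable_cmult:
  "square_summable a I \<Longrightarrow> square_summable (\<lambda>g. c * a g) I"
  using summable_on_cmult_right[of _ I "(cmod c)\<^sup>2"]
  unfolding square_summable_def by (simp add: norm_mult power_mult_distrib)

lemma square_summable_diff:
  assumes "square_summable a I" "square_summable b I"
  shows "square_summable (\<lambda>g. a g - b g) I"
  using square_summable_add[OF assms(1) square_summable_cmult[OF assms(2), of "-1"]] by simp

lemma square_summable_lincomb:
  assumes "finite A" "\<And>v. v \<in> A \<Longrightarrow> square_summable (a v) I"
  shows "square_summable (\<lambda>g. \<Sum>v\<in>A. c v * a v g) I"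
  using assms
  by (induction A rule: finite_induct)
     (auto simp: square_summable_def square_summable_add[unfolded square_summable_def]
        square_summable_cmult[unfolded square_summable_def])

lemma square_summable_cong_cmod:
  "square_summable a I \<Longrightarrow> (\<And>g. g \<in> I \<Longrightarrow> cmod (a g) = cmod (b g)) \<Longrightarrow> square_summable b I"
  unfolding square_summable_def by (metis (no_types, lifting) summable_on_cong)

definition bessel_family :: "'a set \<Rightarrow> ('a \<Rightarrow> 'h::complex_inner) \<Rightarrow> real \<Rightarrow> bool" where
  "bessel_family I \<phi> B \<longleftrightarrow> 0 \<le> B \<and> (\<forall>z. square_summable (\<lambda>g. cinner z (\<phi> g)) I \<and>
     (\<Sum>\<^sub>\<infinity>g\<in>I. (cmod (cinner z (\<phi> g)))\<^sup>2) \<le> B * (norm z)\<^sup>2)"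

lemma bessel_familyD:
  assumes "bessel_family I \<phi> B"
  shows bessel_family_nonneg: "0 \<le> B"
    and bessel_family_summable: "square_summable (\<lambda>g. cinner z (\<phi> g)) I"
    and bessel_family_bound: "(\<Sum>\<^sub>\<infinity>g\<in>I. (cmod (cinner z (\<phi> g)))\<^sup>2) \<le> B * (norm z)\<^sup>2"
  using assms unfolding bessel_family_def by auto

lemma bessel_family_reindex:
  assumes "bij_betw p I J" "bessel_family J \<phi> B"
  shows "bessel_family I (\<lambda>g. \<phi> (p g)) B"
  using assms summable_on_reindex_bij_betw[OF assms(1), of "\<lambda>g. (cmod (cinner _ (\<phi> g)))\<^sup>2"]
    infsum_reindex_bij_betw[OF assms(1), of "\<lambda>g. (cmod (cinner _ (\<phi> g)))\<^sup>2"]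
  unfolding bessel_family_def square_summable_def by simp

lemma bessel_vector_iff_bessel_family:
  "bessel_vector G \<pi> x \<longleftrightarrow> (\<exists>B. bessel_family (carrier G) (\<lambda>g. \<pi> g x) B)"
proof
  assume "bessel_vector G \<pi> x"
  then obtain B where B: "\<forall>z. (\<lambda>g. (cmod (cinner z (\<pi> g x)))\<^sup>2) summable_on carrier G \<and>
     (\<Sum>\<^sub>\<infinity>g\<in>carrier G. (cmod (cinner z (\<pi> g x)))\<^sup>2) \<le> B * (norm z)\<^sup>2"
    unfolding bessel_vector_def by blast
  have "B * (norm z)\<^sup>2 \<le> max B 0 * (norm z)\<^sup>2" for z
    by (intro mult_right_mono) auto
  with B have "bessel_family (carrier G) (\<lambda>g. \<pi> g x) (max B 0)"
    unfolding bessel_family_def square_summable_def by (meson max.cobounded2 order_trans)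
  then show "\<exists>B. bessel_family (carrier G) (\<lambda>g. \<pi> g x) B" ..
qed (auto simp: bessel_vector_def bessel_family_def square_summable_def)

lemma bessel_vectorE:
  assumes "bessel_vector G \<pi> x"
  obtains B where "bessel_family (carrier G) (\<lambda>g. \<pi> g x) B"
  using assms bessel_vector_iff_bessel_family by blast

text \<open>Expand \<open>\<parallel>s\<parallel>\<^sup>2 = \<Sum>\<^sub>g c\<^sub>g \<langle>\<phi>\<^sub>g, s\<rangle>\<close> and apply Cauchy-Schwarz together with the Bessel bound for \<open>s\<close>.\<close>
lemma bessel_synthesis_norm_finite:
  assumes B: "bessel_family I \<phi> B" and F: "finite F" "F \<subseteq> I"
  shows "norm (\<Sum>g\<in>F. scaleC (c g) (\<phi> g)) \<le> sqrt B * sqrt (\<Sum>g\<in>F. (cmod (c g))\<^sup>2)"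
proof -
  define s where "s = (\<Sum>g\<in>F. scaleC (c g) (\<phi> g))"
  have "(norm s)\<^sup>2 = Re (cinner s s)" by (simp add: cinner_self)
  also have "cinner s s = (\<Sum>g\<in>F. c g * cinner (\<phi> g) s)"
    by (subst (1) s_def) (simp add: cinner_sum_left cinner_scaleC_left)
  also have "Re \<dots> \<le> (\<Sum>g\<in>F. \<bar>cmod (c g)\<bar> * \<bar>cmod (cinner s (\<phi> g))\<bar>)"
  proof -
    have "Re (\<Sum>g\<in>F. c g * cinner (\<phi> g) s) \<le> cmod (\<Sum>g\<in>F. c g * cinner (\<phi> g) s)"
      by (rule complex_Re_le_cmod)
    also have "\<dots> \<le> (\<Sum>g\<in>F. cmod (c g * cinner (\<phi> g) s))" by (rule norm_sum)
    also have "\<dots> = (\<Sum>g\<in>F. \<bar>cmod (c g)\<bar> * \<bar>cmod (cinner s (\<phi> g))\<bar>)"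
      by (intro sum.cong refl) (metis abs_norm_cancel cinner_commute complex_mod_cnj norm_mult)
    finally show ?thesis .
  qed
  also have "\<dots> \<le> L2_set (\<lambda>g. cmod (c g)) F * L2_set (\<lambda>g. cmod (cinner s (\<phi> g))) F"
    by (rule L2_set_mult_ineq)
  also have "L2_set (\<lambda>g. cmod (cinner s (\<phi> g))) F \<le> sqrt B * norm s"
  proof -
    have "(\<Sum>g\<in>F. (cmod (cinner s (\<phi> g)))\<^sup>2) \<le> (\<Sum>\<^sub>\<infinity>g\<in>I. (cmod (cinner s (\<phi> g)))\<^sup>2)"
      using bessel_family_summable[OF B] F unfolding square_summable_def
      by (intro finite_sum_le_infsum) auto
    also have "\<dots> \<le> B * (norm s)\<^sup>2" by (rule bessel_family_bound[OF B])
    finally have "L2_set (\<lambda>g. cmod (cinner s (\<phi> g))) F \<le> sqrt (B * (norm s)\<^sup>2)"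
      unfolding L2_set_def by simp
    also have "\<dots> = sqrt B * norm s" by (simp add: real_sqrt_mult)
    finally show ?thesis .
  qed
  then have "L2_set (\<lambda>g. cmod (c g)) F * L2_set (\<lambda>g. cmod (cinner s (\<phi> g))) F
      \<le> L2_set (\<lambda>g. cmod (c g)) F * (sqrt B * norm s)"
    by (intro mult_left_mono) auto
  finally have "norm s * norm s \<le> (L2_set (\<lambda>g. cmod (c g)) F * sqrt B) * norm s"
    by (simp only: power2_eq_square mult.assoc)
  then have "norm s \<le> L2_set (\<lambda>g. cmod (c g)) F * sqrt B"
    using bessel_family_nonneg[OF B] by (cases "norm s = 0") auto
  then show ?thesis unfolding s_def L2_set_def by (simp add: mult.commute)
qed

lemma bessel_synthesis_summable:
  fixes \<phi> :: "'g \<Rightarrow> 'h::{complex_inner,complete_space}"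
  assumes B: "bessel_family I \<phi> B" and c: "square_summable c I"
  shows "(\<lambda>g. scaleC (c g) (\<phi> g)) summable_on I"
proof (rule summable_on_if_tails_small)
  fix e :: real assume "e > 0"
  have B0: "0 \<le> B" by (rule bessel_family_nonneg[OF B])
  define r where "r = e / (sqrt B + 1)"
  have r0: "r > 0" unfolding r_def using \<open>e > 0\<close> B0 by (simp add: add_nonneg_pos)
  obtain F0 where F0: "finite F0" "F0 \<subseteq> I"
    and tail: "\<And>F. finite F \<Longrightarrow> F \<subseteq> I - F0 \<Longrightarrow> (\<Sum>g\<in>F. (cmod (c g))\<^sup>2) \<le> r\<^sup>2"
    using summable_on_tails_small[OF c[unfolded square_summable_def]] r0 by (metis zero_le_power2 zero_less_power)
  have "norm (\<Sum>g\<in>F. scaleC (c g) (\<phi> g)) < e" if "finite F" "F \<subseteq> I - F0" for F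
  proof -
    have "norm (\<Sum>g\<in>F. scaleC (c g) (\<phi> g)) \<le> sqrt B * sqrt (\<Sum>g\<in>F. (cmod (c g))\<^sup>2)"
      by (rule bessel_synthesis_norm_finite[OF B]) (use that in auto)
    also have "\<dots> \<le> sqrt B * r"
      using tail[OF that] r0 B0 by (intro mult_left_mono real_le_lsqrt) auto
    also have "\<dots> < e"
      using \<open>e > 0\<close> B0 unfolding r_def by (simp add: add_nonneg_pos divide_less_eq)
    finally show ?thesis .
  qed
  with F0 show "\<exists>F0. finite F0 \<and> F0 \<subseteq> I \<and> (\<forall>F. finite F \<and> F \<subseteq> I - F0 \<longrightarrow> norm (sum (\<lambda>g. scaleC (c g) (\<phi> g)) F) < e)"
    by blast
qed

lemma bessel_synthesis_norm:
  fixes \<phi> :: "'g \<Rightarrow> 'h::{complex_inner,complete_space}"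
  assumes B: "bessel_family I \<phi> B" and c: "square_summable c I"
  shows "norm (\<Sum>\<^sub>\<infinity>g\<in>I. scaleC (c g) (\<phi> g)) \<le> sqrt B * sqrt (\<Sum>\<^sub>\<infinity>g\<in>I. (cmod (c g))\<^sup>2)"
proof (rule norm_infsum_le_if_finite_sums_le[OF bessel_synthesis_summable[OF B c]])
  fix F assume F: "finite F" "F \<subseteq> I"
  have "norm (\<Sum>g\<in>F. scaleC (c g) (\<phi> g)) \<le> sqrt B * sqrt (\<Sum>g\<in>F. (cmod (c g))\<^sup>2)"
    by (rule bessel_synthesis_norm_finite[OF B F])
  also have "\<dots> \<le> sqrt B * sqrt (\<Sum>\<^sub>\<infinity>g\<in>I. (cmod (c g))\<^sup>2)"
    using c F bessel_family_nonneg[OF B] unfolding square_summable_def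
    by (intro mult_left_mono real_sqrt_le_mono finite_sum_le_infsum) auto
  finally show "norm (\<Sum>g\<in>F. scaleC (c g) (\<phi> g)) \<le> sqrt B * sqrt (\<Sum>\<^sub>\<infinity>g\<in>I. (cmod (c g))\<^sup>2)" .
qed

section \<open>Projective unitary representations and the operators \<open>\<Theta>\<^sub>y\<^sup>* \<Theta>\<^sub>x\<close>\<close>

definition rep_multiplier :: "('g, 'b) monoid_scheme \<Rightarrow> ('g \<Rightarrow> 'h::complex_inner \<Rightarrow> 'h) \<Rightarrow> 'g \<Rightarrow> 'g \<Rightarrow> complex" where
  "rep_multiplier G \<pi> = (SOME \<mu>. \<forall>g\<in>carrier G. \<forall>h\<in>carrier G.
        cmod (\<mu> g h) = 1 \<and> \<pi> g \<circ> \<pi> h = (\<lambda>x. scaleC (\<mu> g h) (\<pi> (g \<otimes>\<^bsub>G\<^esub> h) x)))"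

text \<open>Since \<open>\<pi>(g) \<pi>(g\<inverse>) = \<mu>(g, g\<inverse>) \<pi>(\<one>) = \<mu>(g, g\<inverse>) \<mu>(\<one>, \<one>) I\<close> with unimodular multipliers,
  \<open>\<pi>(g)\<^sup>* = \<pi>(g)\<inverse> = inv_phase G \<pi> g \<cdot> \<pi>(g\<inverse>)\<close>.\<close>
definition inv_phase :: "('g, 'b) monoid_scheme \<Rightarrow> ('g \<Rightarrow> 'h::complex_inner \<Rightarrow> 'h) \<Rightarrow> 'g \<Rightarrow> complex" where
  "inv_phase G \<pi> g = cnj (rep_multiplier G \<pi> g (inv\<^bsub>G\<^esub> g) * rep_multiplier G \<pi> \<one>\<^bsub>G\<^esub> \<one>\<^bsub>G\<^esub>)"

definition rep_adjoint :: "('g, 'b) monoid_scheme \<Rightarrow> ('g \<Rightarrow> 'h::complex_inner \<Rightarrow> 'h) \<Rightarrow> 'g \<Rightarrow> 'h \<Rightarrow> 'h" where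
  "rep_adjoint G \<pi> g y = scaleC (inv_phase G \<pi> g) (\<pi> (inv\<^bsub>G\<^esub> g) y)"

lemma cnj_mult_self_eq_1: "cmod m = 1 \<Longrightarrow> cnj m * m = 1"
  using complex_norm_square[of m] by (simp add: mult.commute)

lemma group_inv_bij_betw: "group G \<Longrightarrow> bij_betw (\<lambda>g. inv\<^bsub>G\<^esub> g) (carrier G) (carrier G)"
  by (rule bij_betw_byWitness[where f'="\<lambda>g. inv\<^bsub>G\<^esub> g"]) (auto simp: group.inv_inv)

lemma group_l_mult_bij_betw:
  assumes "group G" "s \<in> carrier G"
  shows "bij_betw (\<lambda>h. s \<otimes>\<^bsub>G\<^esub> h) (carrier G) (carrier G)"
proof -
  interpret group G by fact
  show ?thesis
    by (rule bij_betw_byWitness[where f'="\<lambda>g. inv\<^bsub>G\<^esub> s \<otimes>\<^bsub>G\<^esub> g"])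
       (use assms(2) in \<open>auto simp: m_assoc[symmetric]\<close>)
qed

locale group_proj_rep = group G for G :: "('g, 'b) monoid_scheme" (structure) +
  fixes \<pi> :: "'g \<Rightarrow> 'h::{complex_inner,complete_space} \<Rightarrow> 'h"
  assumes proj_rep: "proj_unitary_rep G \<pi>"
begin

lemma rep_unitary: "g \<in> carrier G \<Longrightarrow> unitary_op (\<pi> g)"
  using proj_rep unfolding proj_unitary_rep_def by blast

lemma rep_clinear: "g \<in> carrier G \<Longrightarrow> clinear (\<pi> g)"
  by (rule unitary_op_clinear[OF rep_unitary])

lemma rep_multiplier:
  assumes "g \<in> carrier G" "h \<in> carrier G"
  shows rep_multiplier_norm: "cmod (rep_multiplier G \<pi> g h) = 1"
    and rep_mult: "\<pi> g (\<pi> h x) = scaleC (rep_multiplier G \<pi> g h) (\<pi> (g \<otimes> h) x)"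
proof -
  define P where "P = (\<lambda>\<mu>. \<forall>g\<in>carrier G. \<forall>h\<in>carrier G.
        cmod (\<mu> g h) = 1 \<and> \<pi> g \<circ> \<pi> h = (\<lambda>x. scaleC (\<mu> g h) (\<pi> (g \<otimes> h) x)))"
  have "\<exists>\<mu>. P \<mu>" using proj_rep unfolding proj_unitary_rep_def P_def by blast
  then have "P (rep_multiplier G \<pi>)" unfolding rep_multiplier_def P_def[symmetric] by (rule someI_ex)
  then show "cmod (rep_multiplier G \<pi> g h) = 1"
    and "\<pi> g (\<pi> h x) = scaleC (rep_multiplier G \<pi> g h) (\<pi> (g \<otimes> h) x)"
    using assms unfolding P_def by (metis comp_apply)+
qed

lemma rep_mult_eq:
  assumes "g \<in> carrier G" "h \<in> carrier G"
  shows "\<pi> (g \<otimes> h) x = scaleC (cnj (rep_multiplier G \<pi> g h)) (\<pi> g (\<pi> h x))"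
  using rep_mult[OF assms, of x] cnj_mult_self_eq_1[OF rep_multiplier_norm[OF assms]]
  by (simp add: scaleC_scaleC scaleC_one)

lemma rep_one: "\<pi> \<one> x = scaleC (rep_multiplier G \<pi> \<one> \<one>) x"
proof -
  have U: "unitary_op (\<pi> \<one>)" using rep_unitary by simp
  have "\<pi> \<one> (\<pi> \<one> x) = \<pi> \<one> (scaleC (rep_multiplier G \<pi> \<one> \<one>) x)"
    using rep_mult[of \<one> \<one> x] by (simp add: clinear_scaleC[OF unitary_op_clinear[OF U]])
  then show ?thesis using unitary_op_inj[OF U] by (meson injD)
qed

lemma inv_phase_norm: "g \<in> carrier G \<Longrightarrow> cmod (inv_phase G \<pi> g) = 1"
  unfolding inv_phase_def by (simp add: norm_mult rep_multiplier_norm)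

lemma cinner_rep_inv:
  assumes g: "g \<in> carrier G"
  shows "cinner \<xi> (\<pi> (inv g) x) = inv_phase G \<pi> g * cinner (\<pi> g \<xi>) x"
proof -
  have "cinner \<xi> (\<pi> (inv g) x) = cinner (\<pi> g \<xi>) (\<pi> g (\<pi> (inv g) x))"
    using unitary_op_cinner[OF rep_unitary[OF g]] by simp
  also have "\<pi> g (\<pi> (inv g) x) = scaleC (rep_multiplier G \<pi> g (inv g) * rep_multiplier G \<pi> \<one> \<one>) x"
    using rep_mult[OF g inv_closed[OF g]] rep_one g by (simp add: scaleC_scaleC)
  finally show ?thesis by (simp add: cinner_scaleC_right inv_phase_def)
qed

lemma cinner_rep_adjoint:
  assumes g: "g \<in> carrier G"
  shows "cinner (\<pi> g x) y = cinner x (rep_adjoint G \<pi> g y)"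
proof -
  have "cinner x (rep_adjoint G \<pi> g y) = (cnj (inv_phase G \<pi> g) * inv_phase G \<pi> g) * cinner (\<pi> g x) y"
    unfolding rep_adjoint_def by (simp add: cinner_scaleC_right cinner_rep_inv[OF g] mult.assoc)
  then show ?thesis using cnj_mult_self_eq_1[OF inv_phase_norm[OF g]] by simp
qed

lemma rep_adjoint_clinear: "g \<in> carrier G \<Longrightarrow> clinear (rep_adjoint G \<pi> g)"
  unfolding rep_adjoint_def by (intro clinear_scaleC_comp rep_clinear) simp

lemma rep_adjoint_norm: "g \<in> carrier G \<Longrightarrow> norm (rep_adjoint G \<pi> g x) = norm x"
  unfolding rep_adjoint_def by (simp add: norm_scaleC inv_phase_norm unitary_op_norm[OF rep_unitary])

lemma bessel_family_rep_inv:
  "bessel_family (carrier G) (\<lambda>g. \<pi> g y) B \<Longrightarrow> bessel_family (carrier G) (\<lambda>g. \<pi> (inv g) y) B"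
  using bessel_family_reindex[OF group_inv_bij_betw] is_group by blast

end

text \<open>In the notation of the paper, \<open>cross_frame_op G \<pi> x y = \<Theta>\<^sub>y\<^sub>,\<^sub>\<pi>\<^sup>* \<Theta>\<^sub>x\<^sub>,\<^sub>\<pi>\<close>.\<close>
definition cross_frame_op :: "('g, 'b) monoid_scheme \<Rightarrow> ('g \<Rightarrow> 'h::complex_inner \<Rightarrow> 'h) \<Rightarrow> 'h \<Rightarrow> 'h \<Rightarrow> 'h \<Rightarrow> 'h" where
  "cross_frame_op G \<pi> x y z = (\<Sum>\<^sub>\<infinity>g\<in>carrier G. scaleC (cinner z (\<pi> g x)) (\<pi> g y))"

text \<open>Synthesis along the reversed orbit \<open>h \<mapsto> \<pi>(h\<inverse>) y\<close>, with conjugated coefficients: it lets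
  \<open>cross_frame_op G \<pi> x y \<zeta>\<close> be read as a function of the coefficient sequence \<open>\<Theta>\<^sub>\<zeta>(x)\<close>.\<close>
definition rev_synthesis :: "('g, 'b) monoid_scheme \<Rightarrow> ('g \<Rightarrow> 'h::complex_inner \<Rightarrow> 'h) \<Rightarrow> 'h \<Rightarrow> ('g \<Rightarrow> complex) \<Rightarrow> 'h" where
  "rev_synthesis G \<pi> y a = (\<Sum>\<^sub>\<infinity>h\<in>carrier G. scaleC (inv_phase G \<pi> h * cnj (a h)) (\<pi> (inv\<^bsub>G\<^esub> h) y))"

lemma rev_synthesis_cong:
  "(\<And>g. g \<in> carrier G \<Longrightarrow> a g = b g) \<Longrightarrow> rev_synthesis G \<pi> y a = rev_synthesis G \<pi> y b"
  unfolding rev_synthesis_def by (rule infsum_cong) simp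

context group_proj_rep
begin

lemma cross_frame_op_eq_rev_synthesis:
  "cross_frame_op G \<pi> x y \<zeta> = rev_synthesis G \<pi> y (\<lambda>h. cinner x (\<pi> h \<zeta>))"
proof -
  have "cross_frame_op G \<pi> x y \<zeta> = (\<Sum>\<^sub>\<infinity>h\<in>carrier G. scaleC (cinner \<zeta> (\<pi> (inv h) x)) (\<pi> (inv h) y))"
    unfolding cross_frame_op_def
    by (rule infsum_reindex_bij_betw[OF group_inv_bij_betw[OF is_group], symmetric])
  also have "\<dots> = rev_synthesis G \<pi> y (\<lambda>h. cinner x (\<pi> h \<zeta>))"
    unfolding rev_synthesis_def by (rule infsum_cong) (simp add: cinner_rep_inv cinner_commute[of x])
  finally show ?thesis .
qed

context
  fixes y :: 'h and By :: real
  assumes bessel_y: "bessel_family (carrier G) (\<lambda>g. \<pi> g y) By"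
begin

lemma rev_synthesis_summable:
  assumes "square_summable a (carrier G)"
  shows "(\<lambda>h. scaleC (inv_phase G \<pi> h * cnj (a h)) (\<pi> (inv h) y)) summable_on carrier G"
  by (intro bessel_synthesis_summable[OF bessel_family_rep_inv[OF bessel_y]]
      square_summable_cong_cmod[OF assms]) (simp add: norm_mult inv_phase_norm)

lemma rev_synthesis_norm:
  assumes "square_summable a (carrier G)"
  shows "norm (rev_synthesis G \<pi> y a) \<le> sqrt By * sqrt (\<Sum>\<^sub>\<infinity>h\<in>carrier G. (cmod (a h))\<^sup>2)"
proof -
  have "norm (rev_synthesis G \<pi> y a)
      \<le> sqrt By * sqrt (\<Sum>\<^sub>\<infinity>h\<in>carrier G. (cmod (inv_phase G \<pi> h * cnj (a h)))\<^sup>2)"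
    unfolding rev_synthesis_def
    by (intro bessel_synthesis_norm[OF bessel_family_rep_inv[OF bessel_y]]
        square_summable_cong_cmod[OF assms]) (simp add: norm_mult inv_phase_norm)
  also have "(\<Sum>\<^sub>\<infinity>h\<in>carrier G. (cmod (inv_phase G \<pi> h * cnj (a h)))\<^sup>2) = (\<Sum>\<^sub>\<infinity>h\<in>carrier G. (cmod (a h))\<^sup>2)"
    by (rule infsum_cong) (simp add: norm_mult inv_phase_norm)
  finally show ?thesis .
qed

lemma rev_synthesis_diff:
  assumes "square_summable a (carrier G)" "square_summable b (carrier G)"
  shows "rev_synthesis G \<pi> y (\<lambda>h. a h - b h) = rev_synthesis G \<pi> y a - rev_synthesis G \<pi> y b"
  unfolding rev_synthesis_def
  by (simp add: right_diff_distrib scaleC_diff_left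
      infsum_diff[OF rev_synthesis_summable[OF assms(1)] rev_synthesis_summable[OF assms(2)], symmetric])

lemma rev_synthesis_lincomb:
  assumes "finite A" "\<And>v. v \<in> A \<Longrightarrow> square_summable (a v) (carrier G)"
  shows "rev_synthesis G \<pi> y (\<lambda>h. \<Sum>v\<in>A. c v * a v h) = (\<Sum>v\<in>A. scaleC (cnj (c v)) (rev_synthesis G \<pi> y (a v)))"
proof -
  have "rev_synthesis G \<pi> y (\<lambda>h. \<Sum>v\<in>A. c v * a v h) = (\<Sum>\<^sub>\<infinity>h\<in>carrier G.
      \<Sum>v\<in>A. scaleC (cnj (c v)) (scaleC (inv_phase G \<pi> h * cnj (a v h)) (\<pi> (inv h) y)))"
    unfolding rev_synthesis_def
    by (rule infsum_cong) (simp add: scaleC_scaleC scaleC_sum_left sum_distrib_left mult.commute mult.left_commute)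
  also have "\<dots> = (\<Sum>v\<in>A. \<Sum>\<^sub>\<infinity>h\<in>carrier G. scaleC (cnj (c v)) (scaleC (inv_phase G \<pi> h * cnj (a v h)) (\<pi> (inv h) y)))"
    by (rule infsum_finite_sum) (intro summable_on_scaleC_right rev_synthesis_summable assms(2))
  also have "\<dots> = (\<Sum>v\<in>A. scaleC (cnj (c v)) (rev_synthesis G \<pi> y (a v)))"
    unfolding rev_synthesis_def by (intro sum.cong refl infsum_scaleC_right rev_synthesis_summable assms(2))
  finally show ?thesis .
qed

context
  fixes x :: 'h and Bx :: real
  assumes bessel_x: "bessel_family (carrier G) (\<lambda>g. \<pi> g x) Bx"
begin

lemma cross_frame_op_summable: "(\<lambda>g. scaleC (cinner z (\<pi> g x)) (\<pi> g y)) summable_on carrier G"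
  by (rule bessel_synthesis_summable[OF bessel_y bessel_family_summable[OF bessel_x]])

lemma cross_frame_op_clinear: "clinear (cross_frame_op G \<pi> x y)"
  unfolding clinear_def cross_frame_op_def
  by (simp add: cinner_add_left scaleC_add_left infsum_add[OF cross_frame_op_summable cross_frame_op_summable]
      cinner_scaleC_left scaleC_scaleC[symmetric] infsum_scaleC_right[OF cross_frame_op_summable])

lemma cross_frame_op_norm: "norm (cross_frame_op G \<pi> x y z) \<le> norm z * (sqrt By * sqrt Bx)"
proof -
  have "norm (cross_frame_op G \<pi> x y z) \<le> sqrt By * sqrt (\<Sum>\<^sub>\<infinity>g\<in>carrier G. (cmod (cinner z (\<pi> g x)))\<^sup>2)"
    unfolding cross_frame_op_def
    by (rule bessel_synthesis_norm[OF bessel_y bessel_family_summable[OF bessel_x]])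
  also have "\<dots> \<le> sqrt By * sqrt (Bx * (norm z)\<^sup>2)"
    by (intro mult_left_mono real_sqrt_le_mono bessel_family_bound[OF bessel_x])
       (simp add: bessel_family_nonneg[OF bessel_y])
  also have "\<dots> = norm z * (sqrt By * sqrt Bx)" by (simp add: real_sqrt_mult)
  finally show ?thesis .
qed

lemma cross_frame_op_rep_commute:
  assumes s: "s \<in> carrier G"
  shows "cross_frame_op G \<pi> x y (\<pi> s z) = \<pi> s (cross_frame_op G \<pi> x y z)"
proof -
  have U: "unitary_op (\<pi> s)" by (rule rep_unitary[OF s])
  have "cross_frame_op G \<pi> x y (\<pi> s z)
      = (\<Sum>\<^sub>\<infinity>h\<in>carrier G. scaleC (cinner (\<pi> s z) (\<pi> (s \<otimes> h) x)) (\<pi> (s \<otimes> h) y))"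
    unfolding cross_frame_op_def
    by (rule infsum_reindex_bij_betw[OF group_l_mult_bij_betw[OF is_group s], symmetric])
  also have "\<dots> = (\<Sum>\<^sub>\<infinity>h\<in>carrier G. \<pi> s (scaleC (cinner z (\<pi> h x)) (\<pi> h y)))"
  proof (rule infsum_cong)
    fix h assume h: "h \<in> carrier G"
    define m where "m = rep_multiplier G \<pi> s h"
    have m: "m * cnj m = 1"
      unfolding m_def using cnj_mult_self_eq_1[OF rep_multiplier_norm[OF s h]] by (simp add: mult.commute)
    have "scaleC (cinner (\<pi> s z) (\<pi> (s \<otimes> h) x)) (\<pi> (s \<otimes> h) y)
        = scaleC (m * cnj m * cinner z (\<pi> h x)) (\<pi> s (\<pi> h y))"
      using unitary_op_cinner[OF U]
      by (simp add: rep_mult_eq[OF s h] cinner_scaleC_right scaleC_scaleC m_def[symmetric] ac_simps)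
    also have "\<dots> = \<pi> s (scaleC (cinner z (\<pi> h x)) (\<pi> h y))"
      using m by (simp add: clinear_scaleC[OF unitary_op_clinear[OF U]])
    finally show "scaleC (cinner (\<pi> s z) (\<pi> (s \<otimes> h) x)) (\<pi> (s \<otimes> h) y)
        = \<pi> s (scaleC (cinner z (\<pi> h x)) (\<pi> h y))" .
  qed
  also have "\<dots> = \<pi> s (cross_frame_op G \<pi> x y z)"
    unfolding cross_frame_op_def
    by (rule infsum_bounded_linear_apply[OF unitary_op_bounded_linear[OF U] cross_frame_op_summable])
  finally show ?thesis .
qed

lemma cross_frame_op_commutant: "cross_frame_op G \<pi> x y \<in> commutant (\<pi> ` carrier G)"
  by (auto intro!: commutant_memI bounded_clinear_opI cross_frame_op_clinear cross_frame_op_norm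
      cross_frame_op_rep_commute)

end

end

text \<open>\<open>\<langle>\<Theta>\<^sub>x\<^sup>* \<Theta>\<^sub>x w, w\<rangle> = \<parallel>\<Theta>\<^sub>x w\<parallel>\<^sup>2\<close>, whose term at \<open>g = \<one>\<close> is a unimodular multiple of \<open>\<langle>w, x\<rangle>\<close>.\<close>
lemma cinner_eq_0_if_cross_frame_op_self_eq_0:
  assumes bessel: "bessel_family (carrier G) (\<lambda>g. \<pi> g x) B"
    and T0: "cross_frame_op G \<pi> x x w = 0"
  shows "cinner w x = 0"
proof -
  have "0 = cinner (cross_frame_op G \<pi> x x w) w" using T0 by simp
  also have "\<dots> = (\<Sum>\<^sub>\<infinity>g\<in>carrier G. cinner (scaleC (cinner w (\<pi> g x)) (\<pi> g x)) w)"
    unfolding cross_frame_op_def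
    by (rule infsum_bounded_linear_apply[OF bounded_linear_cinner_left
          cross_frame_op_summable[OF bessel bessel], symmetric])
  also have "\<dots> = (\<Sum>\<^sub>\<infinity>g\<in>carrier G. complex_of_real ((cmod (cinner w (\<pi> g x)))\<^sup>2))"
    by (rule infsum_cong)
       (simp add: cinner_scaleC_left cinner_commute[of "\<pi> _ x" w] flip: complex_norm_square)
  also have "\<dots> = complex_of_real (\<Sum>\<^sub>\<infinity>g\<in>carrier G. (cmod (cinner w (\<pi> g x)))\<^sup>2)"
    using bessel_family_summable[OF bessel, of w] unfolding square_summable_def
    by (metis has_sum_infsum has_sum_of_real infsumI)
  finally have sum0: "(\<Sum>\<^sub>\<infinity>g\<in>carrier G. (cmod (cinner w (\<pi> g x)))\<^sup>2) = 0" by simp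
  have "(\<Sum>g\<in>{\<one>}. (cmod (cinner w (\<pi> g x)))\<^sup>2) \<le> (\<Sum>\<^sub>\<infinity>g\<in>carrier G. (cmod (cinner w (\<pi> g x)))\<^sup>2)"
    using bessel_family_summable[OF bessel, of w] unfolding square_summable_def
    by (intro finite_sum_le_infsum) auto
  with sum0 have "cinner w (\<pi> \<one> x) = 0" by simp
  then show ?thesis
    using rep_multiplier_norm[of \<one> \<one>] by (auto simp: rep_one cinner_scaleC_right)
qed

end

section \<open>Closed subspaces of \<open>H\<^sup>(\<^sup>k\<^sup>)\<close> and orthogonal projection\<close>

definition Hk :: "nat \<Rightarrow> (nat \<Rightarrow> 'h::complex_inner) set" where
  "Hk k = {v. \<forall>i\<ge>k. v i = 0}"

definition Hk_norm2 :: "nat \<Rightarrow> (nat \<Rightarrow> 'h::complex_inner) \<Rightarrow> real" where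
  "Hk_norm2 k v = (\<Sum>i<k. (norm (v i))\<^sup>2)"

definition Hk_inner :: "nat \<Rightarrow> (nat \<Rightarrow> 'h::complex_inner) \<Rightarrow> (nat \<Rightarrow> 'h) \<Rightarrow> complex" where
  "Hk_inner k v w = (\<Sum>i<k. cinner (v i) (w i))"

definition Hk_scaleC :: "complex \<Rightarrow> (nat \<Rightarrow> 'h::complex_inner) \<Rightarrow> (nat \<Rightarrow> 'h)" where
  "Hk_scaleC a v = (\<lambda>i. scaleC a (v i))"

definition Hk_diag :: "nat \<Rightarrow> ('h::complex_inner \<Rightarrow> 'h) \<Rightarrow> (nat \<Rightarrow> 'h) \<Rightarrow> (nat \<Rightarrow> 'h)" where
  "Hk_diag k W v = (\<lambda>i. if i < k then W (v i) else 0)"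

lemma Hk_add: "v \<in> Hk k \<Longrightarrow> w \<in> Hk k \<Longrightarrow> (\<lambda>i. v i + w i) \<in> Hk k"
  unfolding Hk_def by simp

lemma Hk_scaleC_mem: "v \<in> Hk k \<Longrightarrow> Hk_scaleC a v \<in> Hk k"
  unfolding Hk_def Hk_scaleC_def by simp

lemma Hk_norm2_nonneg: "0 \<le> Hk_norm2 k v"
  unfolding Hk_norm2_def by (intro sum_nonneg) simp

lemma Hk_norm2_scaleC: "Hk_norm2 k (Hk_scaleC a v) = (cmod a)\<^sup>2 * Hk_norm2 k v"
  unfolding Hk_norm2_def Hk_scaleC_def by (simp add: norm_scaleC power_mult_distrib sum_distrib_left)

lemma norm_square_le_Hk_norm2: "i < k \<Longrightarrow> (norm (v i))\<^sup>2 \<le> Hk_norm2 k v"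
  unfolding Hk_norm2_def by (rule member_le_sum) auto

lemma Hk_norm2_eq_0D: "Hk_norm2 k v = 0 \<Longrightarrow> i < k \<Longrightarrow> v i = 0"
  using norm_square_le_Hk_norm2[of i k v] by simp

lemma Hk_norm2_tendsto:
  "(\<And>i. i < k \<Longrightarrow> (\<lambda>n. X n i) \<longlonglongrightarrow> l i) \<Longrightarrow> (\<lambda>n. Hk_norm2 k (X n)) \<longlonglongrightarrow> Hk_norm2 k l"
  unfolding Hk_norm2_def by (intro tendsto_sum tendsto_power tendsto_norm) auto

lemma Hk_inner_self: "Hk_inner k v v = complex_of_real (Hk_norm2 k v)"
  unfolding Hk_inner_def Hk_norm2_def by (simp add: cinner_self)

lemma Hk_inner_commute: "Hk_inner k w v = cnj (Hk_inner k v w)"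
  unfolding Hk_inner_def by (simp add: cinner_commute[of "w _"])

lemma Hk_inner_add_left: "Hk_inner k (\<lambda>i. x i + y i) b = Hk_inner k x b + Hk_inner k y b"
  unfolding Hk_inner_def by (simp add: cinner_add_left sum.distrib)

lemma Hk_inner_diff_left: "Hk_inner k (\<lambda>i. x i - y i) b = Hk_inner k x b - Hk_inner k y b"
  unfolding Hk_inner_def by (simp add: cinner_diff_left sum_subtractf)

lemma Hk_inner_scaleC_left: "Hk_inner k (Hk_scaleC a x) b = a * Hk_inner k x b"
  unfolding Hk_inner_def Hk_scaleC_def by (simp add: cinner_scaleC_left sum_distrib_left)

lemma Hk_norm2_diff_scaleC:
  "Hk_norm2 k (\<lambda>i. u i - Hk_scaleC a b i)
    = Hk_norm2 k u - 2 * Re (cnj a * Hk_inner k u b) + (cmod a)\<^sup>2 * Hk_norm2 k b"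
  unfolding Hk_norm2_def Hk_inner_def Hk_scaleC_def
  by (simp add: norm_diff_scaleC_square sum.distrib sum_subtractf sum_distrib_left)

lemma Hk_norm2_add: "Hk_norm2 k (\<lambda>i. x i + y i) = Hk_norm2 k x + Hk_norm2 k y + 2 * Re (Hk_inner k x y)"
  unfolding Hk_norm2_def Hk_inner_def by (simp add: norm_add_square_cinner sum.distrib sum_distrib_left)

lemma Hk_parallelogram_law:
  "Hk_norm2 k (\<lambda>i. x i + y i) + Hk_norm2 k (\<lambda>i. x i - y i) = 2 * Hk_norm2 k x + 2 * Hk_norm2 k y"
  unfolding Hk_norm2_def by (simp add: parallelogram_law sum.distrib[symmetric] sum_distrib_left)

lemma Hk_norm2_add_le: "Hk_norm2 k (\<lambda>i. x i + y i) \<le> 2 * Hk_norm2 k x + 2 * Hk_norm2 k y"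
  using Hk_parallelogram_law[of k x y] Hk_norm2_nonneg[of k "\<lambda>i. x i - y i"] by linarith

lemma Hk_norm2_diff_le: "Hk_norm2 k (\<lambda>i. u i - w i) \<le> 2 * Hk_norm2 k (\<lambda>i. u i - v i) + 2 * Hk_norm2 k (\<lambda>i. v i - w i)"
  using Hk_norm2_add_le[of k "\<lambda>i. u i - v i" "\<lambda>i. v i - w i"] by simp

lemma Hk_norm2_scaleR_2: "Hk_norm2 k (\<lambda>i. scaleR 2 (z i)) = 4 * Hk_norm2 k z"
  unfolding Hk_norm2_def by (simp add: power_mult_distrib sum_distrib_left)

lemma Hk_norm2_diff_commute: "Hk_norm2 k (\<lambda>i. u i - w i) = Hk_norm2 k (\<lambda>i. w i - u i)"
  unfolding Hk_norm2_def by (simp add: norm_minus_commute)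

lemma Hk_Cauchy_convergent:
  fixes X :: "nat \<Rightarrow> nat \<Rightarrow> 'h::{complex_inner,complete_space}"
  assumes Cauchy: "\<And>e. e > 0 \<Longrightarrow> \<exists>M. \<forall>m\<ge>M. \<forall>n\<ge>M. Hk_norm2 k (\<lambda>i. X m i - X n i) < e"
  obtains l where "l \<in> Hk k" "\<And>i. i < k \<Longrightarrow> (\<lambda>n. X n i) \<longlonglongrightarrow> l i"
proof -
  have "Cauchy (\<lambda>n. X n i)" if i: "i < k" for i
  proof (rule metric_CauchyI)
    fix e :: real assume "e > 0"
    then obtain M where M: "\<forall>m\<ge>M. \<forall>n\<ge>M. Hk_norm2 k (\<lambda>i. X m i - X n i) < e\<^sup>2"
      using Cauchy[of "e\<^sup>2"] by auto
    have "dist (X m i) (X n i) < e" if "M \<le> m" "M \<le> n" for m n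
    proof -
      have "Hk_norm2 k (\<lambda>i. X m i - X n i) < e\<^sup>2" using M that by blast
      then have "(norm (X m i - X n i))\<^sup>2 < e\<^sup>2"
        using norm_square_le_Hk_norm2[OF i, of "\<lambda>i. X m i - X n i"] by simp
      then show ?thesis using \<open>e > 0\<close> by (simp add: dist_norm power_less_imp_less_base)
    qed
    then show "\<exists>M. \<forall>m\<ge>M. \<forall>n\<ge>M. dist (X m i) (X n i) < e" by blast
  qed
  then have "(\<lambda>n. X n i) \<longlonglongrightarrow> (if i < k then lim (\<lambda>n. X n i) else 0)" if "i < k" for i
    using that by (simp add: Cauchy_convergent_iff convergent_LIMSEQ_iff)
  then show ?thesis by (intro that[of "\<lambda>i. if i < k then lim (\<lambda>n. X n i) else 0"]) (auto simp: Hk_def)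
qed

locale Hk_subspace =
  fixes k :: nat and C :: "(nat \<Rightarrow> 'h::{complex_inner,complete_space}) set"
  assumes subset_Hk: "C \<subseteq> Hk k"
    and zero_mem: "(\<lambda>i. 0) \<in> C"
    and add_mem: "v \<in> C \<Longrightarrow> w \<in> C \<Longrightarrow> (\<lambda>i. v i + w i) \<in> C"
    and scaleC_mem: "v \<in> C \<Longrightarrow> Hk_scaleC a v \<in> C"
    and closed_mem: "v \<in> Hk k \<Longrightarrow> (\<And>e. e > 0 \<Longrightarrow> \<exists>b\<in>C. Hk_norm2 k (\<lambda>i. v i - b i) < e) \<Longrightarrow> v \<in> C"
begin

lemma diff_mem: "v \<in> C \<Longrightarrow> w \<in> C \<Longrightarrow> (\<lambda>i. v i - w i) \<in> C"
  using add_mem[of v "Hk_scaleC (-1) w"] scaleC_mem[of w "-1"]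
  by (simp add: Hk_scaleC_def scaleC_minus_left scaleC_one)

lemma midpoint_mem: "b \<in> C \<Longrightarrow> b' \<in> C \<Longrightarrow> (\<lambda>i. scaleR (1/2) (b i + b' i)) \<in> C"
  using scaleC_mem[OF add_mem, of b b' "complex_of_real (1/2)"]
  by (simp add: Hk_scaleC_def scaleR_scaleC)

lemma vanishes_above: "v \<in> C \<Longrightarrow> i \<ge> k \<Longrightarrow> v i = 0"
  using subset_Hk unfolding Hk_def by blast

lemma lincomb_mem:
  assumes "finite A" "\<And>a. a \<in> A \<Longrightarrow> f a \<in> C"
  shows "(\<lambda>i. \<Sum>a\<in>A. scaleC (c a) (f a i)) \<in> C"
  using assms
proof (induction A rule: finite_induct)
  case empty then show ?case using zero_mem by simp
next
  case (insert a A)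
  then have "(\<lambda>i. Hk_scaleC (c a) (f a) i + (\<Sum>a\<in>A. scaleC (c a) (f a i))) \<in> C"
    by (intro add_mem scaleC_mem) auto
  then show ?case using insert by (simp add: Hk_scaleC_def)
qed

lemma mem_if_tendsto:
  assumes X: "\<And>n. X n \<in> C" and l: "l \<in> Hk k" and lim: "\<And>i. i < k \<Longrightarrow> (\<lambda>n. X n i) \<longlonglongrightarrow> l i"
  shows "l \<in> C"
proof (rule closed_mem[OF l])
  fix e :: real assume "e > 0"
  have "(\<lambda>n. Hk_norm2 k (\<lambda>i. l i - X n i)) \<longlonglongrightarrow> Hk_norm2 k (\<lambda>i. l i - l i)"
    by (intro Hk_norm2_tendsto tendsto_diff tendsto_const lim)
  then have "eventually (\<lambda>n. Hk_norm2 k (\<lambda>i. l i - X n i) < e) sequentially"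
    using \<open>e > 0\<close> by (intro order_tendstoD) (auto simp: Hk_norm2_def)
  then obtain n where "Hk_norm2 k (\<lambda>i. l i - X n i) < e" by (auto simp: eventually_sequentially)
  then show "\<exists>b\<in>C. Hk_norm2 k (\<lambda>i. l i - b i) < e" using X by blast
qed

text \<open>The parallelogram law at the midpoint of \<open>b\<close> and \<open>b'\<close>, which lies in \<open>C\<close>.\<close>
lemma Hk_norm2_diff_le_distance_defect:
  assumes b: "b \<in> C" "b' \<in> C" and d: "\<And>c. c \<in> C \<Longrightarrow> d \<le> Hk_norm2 k (\<lambda>i. v i - c i)"
  shows "Hk_norm2 k (\<lambda>i. b i - b' i) \<le> 2 * Hk_norm2 k (\<lambda>i. v i - b i) + 2 * Hk_norm2 k (\<lambda>i. v i - b' i) - 4 * d"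
proof -
  define m where "m = (\<lambda>i. scaleR (1/2) (b i + b' i))"
  have "(\<lambda>i. (v i - b i) + (v i - b' i)) = (\<lambda>i. scaleR 2 (v i - m i))"
    unfolding m_def by (simp add: algebra_simps scaleR_2)
  moreover have "(\<lambda>i. (v i - b i) - (v i - b' i)) = (\<lambda>i. b' i - b i)"
    by simp
  ultimately have "4 * Hk_norm2 k (\<lambda>i. v i - m i) + Hk_norm2 k (\<lambda>i. b i - b' i)
      = 2 * Hk_norm2 k (\<lambda>i. v i - b i) + 2 * Hk_norm2 k (\<lambda>i. v i - b' i)"
    using Hk_parallelogram_law[of k "\<lambda>i. v i - b i" "\<lambda>i. v i - b' i"]
    by (simp add: Hk_norm2_scaleR_2 Hk_norm2_diff_commute[of k b'])
  moreover have "d \<le> Hk_norm2 k (\<lambda>i. v i - m i)" unfolding m_def by (intro d midpoint_mem b)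
  ultimately show ?thesis by linarith
qed

lemma nearest_point_exists:
  assumes v: "v \<in> Hk k"
  obtains p where "p \<in> C" "\<And>b. b \<in> C \<Longrightarrow> Hk_norm2 k (\<lambda>i. v i - p i) \<le> Hk_norm2 k (\<lambda>i. v i - b i)"
proof -
  define D where "D = (\<lambda>b. Hk_norm2 k (\<lambda>i. v i - b i)) ` C"
  define d where "d = Inf D"
  have D: "D \<noteq> {}" "bdd_below D"
    using zero_mem unfolding D_def by (auto intro!: bdd_belowI[where m=0] simp: Hk_norm2_nonneg)
  have d_le: "d \<le> Hk_norm2 k (\<lambda>i. v i - b i)" if "b \<in> C" for b
    unfolding d_def by (rule cInf_lower[OF _ D(2)]) (use that in \<open>auto simp: D_def\<close>)
  have "\<exists>b\<in>C. Hk_norm2 k (\<lambda>i. v i - b i) < d + inverse (real (Suc n))" for n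
    using cInf_less_iff[OF D, of "d + inverse (real (Suc n))"] unfolding d_def D_def by auto
  then obtain X where X: "\<And>n. X n \<in> C" "\<And>n. Hk_norm2 k (\<lambda>i. v i - X n i) < d + inverse (real (Suc n))"
    by metis
  have Cauchy: "\<exists>M. \<forall>m\<ge>M. \<forall>n\<ge>M. Hk_norm2 k (\<lambda>i. X m i - X n i) < e" if "e > 0" for e
  proof -
    have "e / 4 > 0" using \<open>e > 0\<close> by simp
    then obtain M where M: "inverse (real (Suc M)) < e / 4" using reals_Archimedean by blast
    have "Hk_norm2 k (\<lambda>i. X m i - X n i) < e" if "M \<le> m" "M \<le> n" for m n
    proof -
      have "inverse (real (Suc m)) \<le> inverse (real (Suc M))" "inverse (real (Suc n)) \<le> inverse (real (Suc M))"
        using that by (simp_all add: le_imp_inverse_le)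
      then show ?thesis
        using Hk_norm2_diff_le_distance_defect[OF X(1) X(1) d_le, of m n] X(2)[of m] X(2)[of n] M by linarith
    qed
    then show ?thesis by blast
  qed
  obtain p where p: "p \<in> Hk k" "\<And>i. i < k \<Longrightarrow> (\<lambda>n. X n i) \<longlonglongrightarrow> p i"
    using Hk_Cauchy_convergent[OF Cauchy] by blast
  have "Hk_norm2 k (\<lambda>i. v i - p i) \<le> d"
  proof (rule tendsto_le[OF trivial_limit_sequentially])
    show "(\<lambda>n. d + inverse (real (Suc n))) \<longlonglongrightarrow> d"
      using tendsto_add[OF tendsto_const LIMSEQ_inverse_real_of_nat, of d] by simp
    show "(\<lambda>n. Hk_norm2 k (\<lambda>i. v i - X n i)) \<longlonglongrightarrow> Hk_norm2 k (\<lambda>i. v i - p i)"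
      by (intro Hk_norm2_tendsto tendsto_diff tendsto_const p(2))
    show "eventually (\<lambda>n. Hk_norm2 k (\<lambda>i. v i - X n i) \<le> d + inverse (real (Suc n))) sequentially"
      using X(2) by (simp add: less_imp_le)
  qed
  then show ?thesis using that[OF mem_if_tendsto[OF X(1) p]] d_le by (meson order_trans)
qed

text \<open>Variational characterisation: perturbing a nearest point \<open>p\<close> by \<open>t \<langle>v - p, b\<rangle> b\<close> with
  \<open>t = 1 / (\<parallel>b\<parallel>\<^sup>2 + 1)\<close> changes the squared distance by \<open>-t (1 + t) \<bar>\<langle>v - p, b\<rangle>\<bar>\<^sup>2\<close>.\<close>
lemma nearest_point_orthogonal:
  assumes pC: "p \<in> C" and nearest: "\<And>b. b \<in> C \<Longrightarrow> Hk_norm2 k (\<lambda>i. v i - p i) \<le> Hk_norm2 k (\<lambda>i. v i - b i)"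
    and bC: "b \<in> C"
  shows "Hk_inner k (\<lambda>i. v i - p i) b = 0"
proof -
  define u where "u = (\<lambda>i. v i - p i)"
  define h where "h = Hk_inner k u b"
  define N where "N = Hk_norm2 k b"
  define t where "t = 1 / (N + 1)"
  define a where "a = complex_of_real t * h"
  define s where "s = (cmod h)\<^sup>2"
  have N0: "0 \<le> N" unfolding N_def by (rule Hk_norm2_nonneg)
  have t0: "0 < t" unfolding t_def using N0 by simp
  have tN: "t * N = 1 - t" unfolding t_def using N0 by (simp add: field_simps)
  have "Hk_norm2 k u \<le> Hk_norm2 k (\<lambda>i. v i - (p i + Hk_scaleC a b i))"
    unfolding u_def by (intro nearest add_mem pC scaleC_mem bC)
  also have "(\<lambda>i. v i - (p i + Hk_scaleC a b i)) = (\<lambda>i. u i - Hk_scaleC a b i)"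
    unfolding u_def by (simp add: algebra_simps)
  finally have le: "Hk_norm2 k u \<le> Hk_norm2 k u - 2 * Re (cnj a * h) + (cmod a)\<^sup>2 * N"
    unfolding Hk_norm2_diff_scaleC h_def N_def .
  have "cnj a * h = complex_of_real (t * s)"
    using complex_norm_square[of h] unfolding a_def s_def by (simp add: mult.commute mult.left_commute)
  then have Re1: "Re (cnj a * h) = t * s" by simp
  have ca: "(cmod a)\<^sup>2 = t\<^sup>2 * s"
    unfolding a_def s_def using t0 by (simp add: norm_mult power_mult_distrib)
  from le have "0 \<le> - 2 * (t * s) + t * s * (t * N)" unfolding Re1 ca by (simp add: power2_eq_square ac_simps)
  then have "t * s * (1 + t) \<le> 0" unfolding tN by (simp add: algebra_simps)
  then have "s = 0" using t0 by (simp add: mult_le_0_iff zero_le_mult_iff s_def)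
  then show ?thesis unfolding s_def h_def u_def by simp
qed

definition orth_proj :: "(nat \<Rightarrow> 'h) \<Rightarrow> (nat \<Rightarrow> 'h)" where
  "orth_proj v = (SOME p. p \<in> C \<and> (\<forall>b\<in>C. Hk_inner k (\<lambda>i. v i - p i) b = 0))"

lemma orth_proj:
  assumes v: "v \<in> Hk k"
  shows orth_proj_mem: "orth_proj v \<in> C"
    and orth_proj_orthogonal: "b \<in> C \<Longrightarrow> Hk_inner k (\<lambda>i. v i - orth_proj v i) b = 0"
proof -
  obtain p where "p \<in> C" "\<And>b. b \<in> C \<Longrightarrow> Hk_norm2 k (\<lambda>i. v i - p i) \<le> Hk_norm2 k (\<lambda>i. v i - b i)"
    using nearest_point_exists[OF v] by blast
  then have "\<exists>p. p \<in> C \<and> (\<forall>b\<in>C. Hk_inner k (\<lambda>i. v i - p i) b = 0)"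
    using nearest_point_orthogonal by blast
  then have "orth_proj v \<in> C \<and> (\<forall>b\<in>C. Hk_inner k (\<lambda>i. v i - orth_proj v i) b = 0)"
    unfolding orth_proj_def by (rule someI_ex)
  then show "orth_proj v \<in> C" "b \<in> C \<Longrightarrow> Hk_inner k (\<lambda>i. v i - orth_proj v i) b = 0" by auto
qed

lemma orth_proj_unique:
  assumes v: "v \<in> Hk k" and p: "p \<in> C" and orth: "\<And>b. b \<in> C \<Longrightarrow> Hk_inner k (\<lambda>i. v i - p i) b = 0"
  shows "orth_proj v = p"
proof -
  define q where "q = orth_proj v"
  have qC: "q \<in> C" unfolding q_def by (rule orth_proj_mem[OF v])
  define w where "w = (\<lambda>i. q i - p i)"
  have wC: "w \<in> C" unfolding w_def by (rule diff_mem[OF qC p])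
  have "w = (\<lambda>i. (v i - p i) - (v i - q i))" unfolding w_def by (simp add: fun_eq_iff)
  then have "Hk_inner k w w = Hk_inner k (\<lambda>i. v i - p i) w - Hk_inner k (\<lambda>i. v i - q i) w"
    by (metis Hk_inner_diff_left)
  also have "\<dots> = 0" using orth[OF wC] orth_proj_orthogonal[OF v wC] unfolding q_def by simp
  finally have "Hk_norm2 k w = 0" by (simp add: Hk_inner_self)
  then have "w i = 0" if "i < k" for i using Hk_norm2_eq_0D that by blast
  then have "q i = p i" if "i < k" for i using that unfolding w_def by simp
  moreover have "q i = p i" if "\<not> i < k" for i using vanishes_above[OF qC] vanishes_above[OF p] that by simp
  ultimately show ?thesis unfolding q_def by (meson ext)
qed

lemma orth_proj_id: "v \<in> C \<Longrightarrow> orth_proj v = v"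
  by (rule orth_proj_unique) (use subset_Hk in \<open>auto simp: Hk_inner_def\<close>)

lemma orth_proj_add:
  assumes "v \<in> Hk k" "w \<in> Hk k"
  shows "orth_proj (\<lambda>i. v i + w i) = (\<lambda>i. orth_proj v i + orth_proj w i)"
proof (rule orth_proj_unique)
  show "(\<lambda>i. v i + w i) \<in> Hk k" using assms by (rule Hk_add)
  show "(\<lambda>i. orth_proj v i + orth_proj w i) \<in> C" using orth_proj_mem[OF assms(1)] orth_proj_mem[OF assms(2)] by (rule add_mem)
  fix b assume b: "b \<in> C"
  have "(\<lambda>i. v i + w i - (orth_proj v i + orth_proj w i)) = (\<lambda>i. (v i - orth_proj v i) + (w i - orth_proj w i))"
    by (simp add: algebra_simps)
  then show "Hk_inner k (\<lambda>i. v i + w i - (orth_proj v i + orth_proj w i)) b = 0"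
    using orth_proj_orthogonal[OF assms(1) b] orth_proj_orthogonal[OF assms(2) b] by (simp add: Hk_inner_add_left)
qed

lemma orth_proj_scaleC:
  assumes "v \<in> Hk k"
  shows "orth_proj (Hk_scaleC a v) = Hk_scaleC a (orth_proj v)"
proof (rule orth_proj_unique)
  show "Hk_scaleC a v \<in> Hk k" using assms by (rule Hk_scaleC_mem)
  show "Hk_scaleC a (orth_proj v) \<in> C" using orth_proj_mem[OF assms] by (rule scaleC_mem)
  fix b assume b: "b \<in> C"
  have "(\<lambda>i. Hk_scaleC a v i - Hk_scaleC a (orth_proj v) i) = Hk_scaleC a (\<lambda>i. v i - orth_proj v i)"
    unfolding Hk_scaleC_def by (simp add: scaleC_diff_right)
  then show "Hk_inner k (\<lambda>i. Hk_scaleC a v i - Hk_scaleC a (orth_proj v) i) b = 0"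
    using orth_proj_orthogonal[OF assms b] by (simp add: Hk_inner_scaleC_left)
qed

lemma orth_proj_zero: "orth_proj (\<lambda>i. 0) = (\<lambda>i. 0)"
  by (rule orth_proj_id[OF zero_mem])

lemma orth_proj_sum:
  assumes "finite J" "\<And>j. j \<in> J \<Longrightarrow> f j \<in> Hk k"
  shows "orth_proj (\<lambda>i. \<Sum>j\<in>J. f j i) = (\<lambda>i. \<Sum>j\<in>J. orth_proj (f j) i)"
  using assms
proof (induction J rule: finite_induct)
  case empty
  then show ?case using orth_proj_zero by simp
next
  case (insert j J)
  have fV: "f j \<in> Hk k" using insert by auto
  have sV: "(\<lambda>i. \<Sum>j\<in>J. f j i) \<in> Hk k" using insert(4) unfolding Hk_def by auto
  have "orth_proj (\<lambda>i. \<Sum>j\<in>insert j J. f j i) = orth_proj (\<lambda>i. f j i + (\<Sum>j\<in>J. f j i))"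
    using insert by simp
  also have "\<dots> = (\<lambda>i. orth_proj (f j) i + orth_proj (\<lambda>i. \<Sum>j\<in>J. f j i) i)"
    using orth_proj_add[OF fV sV] by simp
  also have "\<dots> = (\<lambda>i. \<Sum>j\<in>insert j J. orth_proj (f j) i)"
    using insert by simp
  finally show ?case .
qed

lemma Hk_norm2_resid_le:
  assumes v: "v \<in> Hk k"
  shows "Hk_norm2 k (\<lambda>i. v i - orth_proj v i) \<le> Hk_norm2 k v"
proof -
  have "v = (\<lambda>i. orth_proj v i + (v i - orth_proj v i))" by simp
  then have "Hk_norm2 k v = Hk_norm2 k (orth_proj v) + Hk_norm2 k (\<lambda>i. v i - orth_proj v i) + 2 * Re (Hk_inner k (orth_proj v) (\<lambda>i. v i - orth_proj v i))"
    by (metis Hk_norm2_add)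
  moreover have "Hk_inner k (orth_proj v) (\<lambda>i. v i - orth_proj v i) = 0"
    using orth_proj_orthogonal[OF v orth_proj_mem[OF v]] Hk_inner_commute[of k "orth_proj v" "\<lambda>i. v i - orth_proj v i"] by simp
  ultimately show ?thesis using Hk_norm2_nonneg[of k "orth_proj v"] by simp
qed

lemma orth_proj_Hk_diag:
  assumes W: "clinear W" and W': "\<And>x y. cinner (W x) y = cinner x (W' y)"
    and WC: "\<And>b. b \<in> C \<Longrightarrow> Hk_diag k W b \<in> C"
    and W'C: "\<And>b. b \<in> C \<Longrightarrow> Hk_diag k W' b \<in> C"
    and v: "v \<in> Hk k"
  shows "orth_proj (Hk_diag k W v) = Hk_diag k W (orth_proj v)"
proof (rule orth_proj_unique)
  show "Hk_diag k W v \<in> Hk k" unfolding Hk_def Hk_diag_def by simp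
  show "Hk_diag k W (orth_proj v) \<in> C" by (rule WC[OF orth_proj_mem[OF v]])
  fix b assume b: "b \<in> C"
  have "Hk_inner k (\<lambda>i. Hk_diag k W v i - Hk_diag k W (orth_proj v) i) b
      = (\<Sum>i<k. cinner (W (v i - orth_proj v i)) (b i))"
    unfolding Hk_inner_def Hk_diag_def by (intro sum.cong) (auto simp: clinear_diff[OF W])
  also have "\<dots> = (\<Sum>i<k. cinner (v i - orth_proj v i) (Hk_diag k W' b i))"
    unfolding Hk_diag_def by (intro sum.cong) (auto simp: W')
  also have "\<dots> = Hk_inner k (\<lambda>i. v i - orth_proj v i) (Hk_diag k W' b)" unfolding Hk_inner_def ..
  also have "\<dots> = 0" by (rule orth_proj_orthogonal[OF v W'C[OF b]])
  finally show "Hk_inner k (\<lambda>i. Hk_diag k W v i - Hk_diag k W (orth_proj v) i) b = 0" .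
qed

end

lemma Hk_span_zero: "(\<lambda>i. 0) \<in> Hk_span S"
  unfolding Hk_span_def by (rule CollectI, rule exI[of _ "{}"]) simp

lemma Hk_span_superset: "s \<in> S \<Longrightarrow> s \<in> Hk_span S"
  unfolding Hk_span_def
  by (rule CollectI, intro exI[of _ "{s}"] exI[of _ "\<lambda>_. 1"]) (simp add: scaleC_one)

lemma Hk_span_add:
  assumes "w1 \<in> Hk_span S" "w2 \<in> Hk_span S"
  shows "(\<lambda>i. w1 i + w2 i) \<in> Hk_span S"
proof -
  obtain A c where A: "finite A" "A \<subseteq> S" "w1 = (\<lambda>i. \<Sum>v\<in>A. scaleC (c v) (v i))"
    using assms(1) unfolding Hk_span_def by blast
  obtain B d where B: "finite B" "B \<subseteq> S" "w2 = (\<lambda>i. \<Sum>v\<in>B. scaleC (d v) (v i))"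
    using assms(2) unfolding Hk_span_def by blast
  have extend: "(\<Sum>v\<in>X. scaleC (f v) (v i)) = (\<Sum>v\<in>A \<union> B. scaleC (if v \<in> X then f v else 0) (v i))"
    if "X \<subseteq> A \<union> B" for X f i
    using A(1) B(1) that by (intro sum.mono_neutral_cong_left) auto
  have "(\<lambda>i. w1 i + w2 i)
      = (\<lambda>i. \<Sum>v\<in>A \<union> B. scaleC ((if v \<in> A then c v else 0) + (if v \<in> B then d v else 0)) (v i))"
    unfolding A(3) B(3) by (simp add: extend[of A c] extend[of B d] scaleC_add_left sum.distrib)
  then show ?thesis unfolding Hk_span_def using A B
    by (intro CollectI exI[of _ "A \<union> B"] exI[of _ "\<lambda>v. (if v \<in> A then c v else 0) + (if v \<in> B then d v else 0)"]) auto
qed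

lemma Hk_span_scaleC:
  assumes "w \<in> Hk_span S"
  shows "Hk_scaleC a w \<in> Hk_span S"
proof -
  obtain A c where A: "finite A" "A \<subseteq> S" "w = (\<lambda>i. \<Sum>v\<in>A. scaleC (c v) (v i))"
    using assms(1) unfolding Hk_span_def by blast
  have "Hk_scaleC a w = (\<lambda>i. \<Sum>v\<in>A. scaleC (a * c v) (v i))"
    unfolding A(3) Hk_scaleC_def by (simp add: scaleC_sum_right scaleC_scaleC)
  then show ?thesis unfolding Hk_span_def
    by (intro CollectI exI[of _ A] exI[of _ "\<lambda>v. a * c v"]) (use A in auto)
qed

lemma Hk_closed_span_iff:
  "v \<in> Hk_closed_span k S \<longleftrightarrow> v \<in> Hk k \<and> (\<forall>e>0. \<exists>w\<in>Hk_span S. Hk_norm2 k (\<lambda>i. v i - w i) < e)"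
  unfolding Hk_closed_span_def Hk_def Hk_norm2_def by blast

lemma Hk_closed_span_add:
  assumes v: "v \<in> Hk_closed_span k S" and w: "w \<in> Hk_closed_span k S"
  shows "(\<lambda>i. v i + w i) \<in> Hk_closed_span k S"
  unfolding Hk_closed_span_iff
proof (intro conjI allI impI)
  show "(\<lambda>i. v i + w i) \<in> Hk k" using v w unfolding Hk_closed_span_iff by (auto intro: Hk_add)
  fix e :: real assume "e > 0"
  then have "e / 4 > 0" by simp
  then obtain v' w' where v': "v' \<in> Hk_span S" "Hk_norm2 k (\<lambda>i. v i - v' i) < e / 4"
    and w': "w' \<in> Hk_span S" "Hk_norm2 k (\<lambda>i. w i - w' i) < e / 4"
    using v w unfolding Hk_closed_span_iff by blast
  have "Hk_norm2 k (\<lambda>i. v i + w i - (v' i + w' i)) \<le> 2 * Hk_norm2 k (\<lambda>i. v i - v' i) + 2 * Hk_norm2 k (\<lambda>i. w i - w' i)"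
    using Hk_norm2_add_le[of k "\<lambda>i. v i - v' i" "\<lambda>i. w i - w' i"] by (simp add: algebra_simps)
  then show "\<exists>u\<in>Hk_span S. Hk_norm2 k (\<lambda>i. v i + w i - u i) < e"
    using v' w' Hk_span_add[OF v'(1) w'(1)] by (intro bexI[of _ "\<lambda>i. v' i + w' i"]) auto
qed

lemma Hk_closed_span_scaleC:
  assumes v: "v \<in> Hk_closed_span k S"
  shows "Hk_scaleC a v \<in> Hk_closed_span k S"
  unfolding Hk_closed_span_iff
proof (intro conjI allI impI)
  show "Hk_scaleC a v \<in> Hk k" using v unfolding Hk_closed_span_iff by (auto intro: Hk_scaleC_mem)
  fix e :: real assume "e > 0"
  then have "e / ((cmod a)\<^sup>2 + 1) > 0" by (simp add: add_nonneg_pos)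
  then obtain v' where v': "v' \<in> Hk_span S" "Hk_norm2 k (\<lambda>i. v i - v' i) < e / ((cmod a)\<^sup>2 + 1)"
    using v unfolding Hk_closed_span_iff by blast
  have "Hk_norm2 k (\<lambda>i. Hk_scaleC a v i - Hk_scaleC a v' i) = (cmod a)\<^sup>2 * Hk_norm2 k (\<lambda>i. v i - v' i)"
    using Hk_norm2_scaleC[of k a "\<lambda>i. v i - v' i"] by (simp add: Hk_scaleC_def scaleC_diff_right)
  also have "\<dots> \<le> (cmod a)\<^sup>2 * (e / ((cmod a)\<^sup>2 + 1))"
    using v'(2) by (intro mult_left_mono) auto
  also have "\<dots> < e"
    using \<open>e > 0\<close> by (simp add: divide_less_eq add_nonneg_pos)
  finally show "\<exists>u\<in>Hk_span S. Hk_norm2 k (\<lambda>i. Hk_scaleC a v i - u i) < e"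
    using Hk_span_scaleC[OF v'(1)] by blast
qed

lemma Hk_closed_span_closed:
  assumes v: "v \<in> Hk k" and approx: "\<And>e. e > 0 \<Longrightarrow> \<exists>b\<in>Hk_closed_span k S. Hk_norm2 k (\<lambda>i. v i - b i) < e"
  shows "v \<in> Hk_closed_span k S"
  unfolding Hk_closed_span_iff
proof (intro conjI allI impI v)
  fix e :: real assume "e > 0"
  then obtain b where b: "b \<in> Hk_closed_span k S" "Hk_norm2 k (\<lambda>i. v i - b i) < e / 4"
    using approx[of "e / 4"] by auto
  moreover have "e / 4 > 0" using \<open>e > 0\<close> by simp
  ultimately obtain w where w: "w \<in> Hk_span S" "Hk_norm2 k (\<lambda>i. b i - w i) < e / 4"
    unfolding Hk_closed_span_iff by blast
  then show "\<exists>w\<in>Hk_span S. Hk_norm2 k (\<lambda>i. v i - w i) < e"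
    using Hk_norm2_diff_le[of k v w b] b(2) by (intro bexI[of _ w]) auto
qed

lemma Hk_subspace_closed_span:
  fixes S :: "(nat \<Rightarrow> 'h::{complex_inner,complete_space}) set"
  shows "Hk_subspace k (Hk_closed_span k S)"
proof
  show "Hk_closed_span k S \<subseteq> Hk k" using Hk_closed_span_iff by blast
  show "(\<lambda>i. 0) \<in> Hk_closed_span k S"
    unfolding Hk_closed_span_iff using Hk_span_zero[of S]
    by (auto simp: Hk_def Hk_norm2_def intro!: bexI[of _ "\<lambda>i. 0"])
qed (auto intro: Hk_closed_span_add Hk_closed_span_scaleC Hk_closed_span_closed)

lemma Hk_closed_span_least:
  fixes S :: "(nat \<Rightarrow> 'h::{complex_inner,complete_space}) set"
  assumes C: "Hk_subspace k C" and SC: "S \<subseteq> C"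
  shows "Hk_closed_span k S \<subseteq> C"
proof
  interpret Hk_subspace k C by fact
  have spanC: "Hk_span S \<subseteq> C"
    unfolding Hk_span_def using SC by (auto intro!: lincomb_mem)
  fix v assume v: "v \<in> Hk_closed_span k S"
  show "v \<in> C"
  proof (rule closed_mem)
    show "v \<in> Hk k" using v unfolding Hk_closed_span_iff by blast
    show "\<exists>b\<in>C. Hk_norm2 k (\<lambda>i. v i - b i) < e" if "e > 0" for e
      using v that spanC unfolding Hk_closed_span_iff by blast
  qed
qed

lemma Hk_closed_span_superset:
  assumes S: "S \<subseteq> Hk k" and s: "s \<in> S"
  shows "s \<in> Hk_closed_span k S"
  unfolding Hk_closed_span_iff
proof (intro conjI allI impI)
  show "s \<in> Hk k" using S s by blast
  show "\<exists>w\<in>Hk_span S. Hk_norm2 k (\<lambda>i. s i - w i) < e" if "e > 0" for e :: real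
    using Hk_span_superset[OF s] that by (intro bexI[of _ s]) (auto simp: Hk_norm2_def)
qed

lemma Hk_closed_span_Hk_diag_invariant:
  fixes S :: "(nat \<Rightarrow> 'h::{complex_inner,complete_space}) set"
  assumes W: "clinear W" and Wn: "\<And>x. norm (W x) = norm x"
    and WS: "\<And>s. s \<in> S \<Longrightarrow> Hk_diag k W s \<in> Hk_closed_span k S"
    and b: "b \<in> Hk_closed_span k S"
  shows "Hk_diag k W b \<in> Hk_closed_span k S"
proof -
  interpret Hk_subspace k "Hk_closed_span k S" by (rule Hk_subspace_closed_span)
  have span: "Hk_diag k W w \<in> Hk_closed_span k S" if w: "w \<in> Hk_span S" for w
  proof -
    obtain A c where A: "finite A" "A \<subseteq> S" "w = (\<lambda>i. \<Sum>v\<in>A. scaleC (c v) (v i))"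
      using w unfolding Hk_span_def by blast
    have "Hk_diag k W w i = (\<Sum>v\<in>A. scaleC (c v) (Hk_diag k W v i))" for i
    proof (cases "i < k")
      case True
      then have "Hk_diag k W w i = W (\<Sum>v\<in>A. scaleC (c v) (v i))" unfolding A(3) Hk_diag_def by simp
      also have "\<dots> = (\<Sum>v\<in>A. scaleC (c v) (Hk_diag k W v i))"
        using True by (simp add: clinear_sum[OF W] clinear_scaleC[OF W] Hk_diag_def)
      finally show ?thesis .
    qed (simp add: Hk_diag_def)
    then have "Hk_diag k W w = (\<lambda>i. \<Sum>v\<in>A. scaleC (c v) (Hk_diag k W v i))" by (rule ext)
    also have "\<dots> \<in> Hk_closed_span k S" using A WS by (intro lincomb_mem) auto
    finally show ?thesis .
  qed
  have dist: "Hk_norm2 k (\<lambda>i. Hk_diag k W b i - Hk_diag k W w i) = Hk_norm2 k (\<lambda>i. b i - w i)" for w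
    unfolding Hk_norm2_def Hk_diag_def by (intro sum.cong refl) (simp add: Wn flip: clinear_diff[OF W])
  show ?thesis
  proof (rule closed_mem)
    show "Hk_diag k W b \<in> Hk k" unfolding Hk_def Hk_diag_def by simp
    fix e :: real assume "e > 0"
    then obtain w where "w \<in> Hk_span S" "Hk_norm2 k (\<lambda>i. b i - w i) < e"
      using b unfolding Hk_closed_span_iff by blast
    then show "\<exists>b'\<in>Hk_closed_span k S. Hk_norm2 k (\<lambda>i. Hk_diag k W b i - b' i) < e"
      using span dist by (intro bexI[of _ "Hk_diag k W w"]) simp_all
  qed
qed

definition Hk_unit :: "nat \<Rightarrow> 'h::complex_inner \<Rightarrow> (nat \<Rightarrow> 'h)" where
  "Hk_unit j x = (\<lambda>l. if l = j then x else 0)"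

lemma Hk_unit_mem: "j < k \<Longrightarrow> Hk_unit j x \<in> Hk k"
  unfolding Hk_unit_def Hk_def by auto

lemma Hk_norm2_unit: "j < k \<Longrightarrow> Hk_norm2 k (Hk_unit j x) = (norm x)\<^sup>2"
proof -
  assume j: "j < k"
  have "Hk_norm2 k (Hk_unit j x) = (\<Sum>l<k. if l = j then (norm x)\<^sup>2 else 0)"
    unfolding Hk_norm2_def Hk_unit_def by (intro sum.cong) auto
  also have "\<dots> = (norm x)\<^sup>2" using j by simp
  finally show ?thesis .
qed

lemma sum_Hk_unit: "v \<in> Hk k \<Longrightarrow> (\<Sum>j<k. Hk_unit j (v j) l) = v l"
proof -
  assume v: "v \<in> Hk k"
  have "(\<Sum>j<k. Hk_unit j (v j) l) = (\<Sum>j<k. if l = j then v l else 0)"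
    unfolding Hk_unit_def by (intro sum.cong) auto
  also have "\<dots> = (if l < k then v l else 0)" by simp
  also have "\<dots> = v l" using v unfolding Hk_def by auto
  finally show ?thesis .
qed

context Hk_subspace
begin

definition resid_entry :: "nat \<Rightarrow> nat \<Rightarrow> 'h \<Rightarrow> 'h" where
  "resid_entry i j x = Hk_unit j x i - orth_proj (Hk_unit j x) i"

lemma resid_entry_clinear: assumes j: "j < k" shows "clinear (resid_entry i j)"
  unfolding clinear_def
proof (intro conjI allI)
  fix x y :: 'h
  have "Hk_unit j (x + y) = (\<lambda>l. Hk_unit j x l + Hk_unit j y l)" unfolding Hk_unit_def by auto
  then show "resid_entry i j (x + y) = resid_entry i j x + resid_entry i j y"
    unfolding resid_entry_def using orth_proj_add[OF Hk_unit_mem[OF j] Hk_unit_mem[OF j], of x y] by simp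
next
  fix a and x :: 'h
  have "Hk_unit j (scaleC a x) = Hk_scaleC a (Hk_unit j x)" unfolding Hk_unit_def Hk_scaleC_def by auto
  then show "resid_entry i j (scaleC a x) = scaleC a (resid_entry i j x)"
    unfolding resid_entry_def using orth_proj_scaleC[OF Hk_unit_mem[OF j], of a x]
    by (simp add: Hk_scaleC_def scaleC_diff_right)
qed

lemma resid_entry_contraction: assumes j: "j < k" shows "norm (resid_entry i j x) \<le> norm x"
proof (cases "i < k")
  case True
  define v where "v = Hk_unit j x"
  have vV: "v \<in> Hk k" unfolding v_def by (rule Hk_unit_mem[OF j])
  have "(norm (resid_entry i j x))\<^sup>2 \<le> Hk_norm2 k (\<lambda>l. v l - orth_proj v l)"
    unfolding resid_entry_def v_def[symmetric] by (rule norm_square_le_Hk_norm2[OF True])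
  also have "\<dots> \<le> (norm x)\<^sup>2"
    using Hk_norm2_resid_le[OF vV] unfolding v_def Hk_norm2_unit[OF j] .
  finally show ?thesis by (rule power2_le_imp_le) simp
next
  case False
  have "orth_proj (Hk_unit j x) i = 0" using vanishes_above[OF orth_proj_mem[OF Hk_unit_mem[OF j]]] False by simp
  moreover have "Hk_unit j x i = 0" using False j unfolding Hk_unit_def by auto
  ultimately show ?thesis unfolding resid_entry_def by simp
qed

lemma resid_entry_bounded: "j < k \<Longrightarrow> bounded_clinear_op (resid_entry i j)"
  unfolding bounded_clinear_op_def using resid_entry_clinear resid_entry_contraction
  by (metis mult.right_neutral)

lemma resid_entry_commute:
  assumes j: "j < k" and W: "clinear W" and W': "\<And>x y. cinner (W x) y = cinner x (W' y)"
    and WC: "\<And>b. b \<in> C \<Longrightarrow> Hk_diag k W b \<in> C"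
    and W'C: "\<And>b. b \<in> C \<Longrightarrow> Hk_diag k W' b \<in> C"
  shows "resid_entry i j (W x) = W (resid_entry i j x)"
proof -
  have e: "Hk_unit j (W x) = Hk_diag k W (Hk_unit j x)"
    unfolding Hk_unit_def Hk_diag_def using j by (auto simp: fun_eq_iff clinear_zero[OF W])
  have p: "orth_proj (Hk_diag k W (Hk_unit j x)) = Hk_diag k W (orth_proj (Hk_unit j x))"
    by (rule orth_proj_Hk_diag[OF W W' WC W'C Hk_unit_mem[OF j]])
  show ?thesis
  proof (cases "i < k")
    case True
    then show ?thesis unfolding resid_entry_def e p by (simp add: Hk_diag_def clinear_diff[OF W])
  next
    case False
    have "orth_proj (Hk_unit j x) i = 0" using vanishes_above[OF orth_proj_mem[OF Hk_unit_mem[OF j]]] False by simp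
    moreover have "Hk_unit j x i = 0" using False j unfolding Hk_unit_def by auto
    ultimately show ?thesis unfolding resid_entry_def e p using False by (simp add: Hk_diag_def clinear_zero[OF W])
  qed
qed

lemma resid_eq_sum_resid_entry:
  assumes v: "v \<in> Hk k"
  shows "v l - orth_proj v l = (\<Sum>j<k. resid_entry l j (v j))"
proof -
  have "orth_proj v = orth_proj (\<lambda>l. \<Sum>j<k. Hk_unit j (v j) l)" using sum_Hk_unit[OF v] by simp
  also have "\<dots> = (\<lambda>l. \<Sum>j<k. orth_proj (Hk_unit j (v j)) l)"
    by (rule orth_proj_sum) (auto intro: Hk_unit_mem)
  finally have "orth_proj v l = (\<Sum>j<k. orth_proj (Hk_unit j (v j)) l)" by simp
  then have "v l - orth_proj v l = (\<Sum>j<k. Hk_unit j (v j) l) - (\<Sum>j<k. orth_proj (Hk_unit j (v j)) l)"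
    using sum_Hk_unit[OF v] by simp
  also have "\<dots> = (\<Sum>j<k. resid_entry l j (v j))" unfolding resid_entry_def by (simp add: sum_subtractf)
  finally show ?thesis .
qed

end

context Hk_subspace
begin

lemma mem_iff_resid_entries_eq_0:
  assumes v: "v \<in> Hk k"
  shows "v \<in> C \<longleftrightarrow> (\<forall>l. (\<Sum>j<k. resid_entry l j (v j)) = 0)"
proof
  assume "v \<in> C"
  then show "\<forall>l. (\<Sum>j<k. resid_entry l j (v j)) = 0"
    using resid_eq_sum_resid_entry[OF v] orth_proj_id by simp
next
  assume "\<forall>l. (\<Sum>j<k. resid_entry l j (v j)) = 0"
  then have "orth_proj v = v" using resid_eq_sum_resid_entry[OF v] by (simp add: fun_eq_iff)
  then show "v \<in> C" using orth_proj_mem[OF v] by simp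
qed

end

definition cyclic_subspace :: "nat \<Rightarrow> ('g, 'b) monoid_scheme \<Rightarrow> ('g \<Rightarrow> 'h::complex_inner \<Rightarrow> 'h) \<Rightarrow> (nat \<Rightarrow> 'h) \<Rightarrow> (nat \<Rightarrow> 'h) set" where
  "cyclic_subspace k G \<sigma> \<eta> = Hk_closed_span k ((\<lambda>g. rep_k k \<sigma> g \<eta>) ` carrier G)"

definition Hk_trunc :: "nat \<Rightarrow> (nat \<Rightarrow> 'h::zero) \<Rightarrow> (nat \<Rightarrow> 'h)" where
  "Hk_trunc k v = (\<lambda>i. if i < k then v i else 0)"

lemma Hk_trunc_mem: "Hk_trunc k v \<in> Hk k"
  unfolding Hk_trunc_def Hk_def by simp

lemma rep_k_eq_Hk_diag_trunc: "rep_k k \<sigma> g v = Hk_diag k (\<sigma> g) (Hk_trunc k v)"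
  unfolding rep_k_def Hk_diag_def Hk_trunc_def by (simp add: fun_eq_iff)

lemma orbit_subset_Hk: "(\<lambda>g. rep_k k \<sigma> g \<eta>) ` carrier G \<subseteq> Hk k"
  unfolding Hk_def rep_k_def by auto

context group_proj_rep
begin

lemma Hk_subspace_cyclic_subspace: "Hk_subspace k (cyclic_subspace k G \<pi> \<eta>)"
  unfolding cyclic_subspace_def by (rule Hk_subspace_closed_span)

lemma rep_k_mem_cyclic_subspace: "h \<in> carrier G \<Longrightarrow> rep_k k \<pi> h \<eta> \<in> cyclic_subspace k G \<pi> \<eta>"
  unfolding cyclic_subspace_def by (rule Hk_closed_span_superset[OF orbit_subset_Hk]) auto

text \<open>Both \<open>\<pi>(g)\<close> and its adjoint \<open>rep_adjoint G \<pi> g\<close> map the orbit of \<open>\<eta>\<close> into unimodular multiples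
  of orbit points.\<close>
lemma cyclic_subspace_Hk_diag_invariant:
  assumes W: "W = \<pi> g \<or> W = rep_adjoint G \<pi> g" and g: "g \<in> carrier G"
    and b: "b \<in> cyclic_subspace k G \<pi> \<eta>"
  shows "Hk_diag k W b \<in> cyclic_subspace k G \<pi> \<eta>"
  unfolding cyclic_subspace_def
proof (rule Hk_closed_span_Hk_diag_invariant[OF _ _ _ b[unfolded cyclic_subspace_def]])
  show "clinear W" using W g rep_clinear rep_adjoint_clinear by blast
  show "norm (W x) = norm x" for x
    using W g rep_adjoint_norm unitary_op_norm[OF rep_unitary] by blast
  interpret C: Hk_subspace k "cyclic_subspace k G \<pi> \<eta>" by (rule Hk_subspace_cyclic_subspace)
  fix s assume "s \<in> (\<lambda>h. rep_k k \<pi> h \<eta>) ` carrier G"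
  then obtain h where h: "h \<in> carrier G" and s: "s = rep_k k \<pi> h \<eta>" by blast
  obtain g' c where g': "g' \<in> carrier G" and "\<And>x. W (\<pi> h x) = scaleC c (\<pi> g' x)"
    using W
  proof
    assume "W = \<pi> g"
    then show ?thesis using that[of "g \<otimes> h"] g h by (simp add: rep_mult)
  next
    assume "W = rep_adjoint G \<pi> g"
    then show ?thesis using that[of "inv g \<otimes> h"] g h
      by (simp add: rep_adjoint_def rep_mult scaleC_scaleC)
  qed
  then have "Hk_diag k W s = Hk_scaleC c (rep_k k \<pi> g' \<eta>)"
    unfolding s Hk_diag_def rep_k_def Hk_scaleC_def by (auto simp: fun_eq_iff)
  also have "\<dots> \<in> cyclic_subspace k G \<pi> \<eta>" by (rule C.scaleC_mem[OF rep_k_mem_cyclic_subspace[OF g']])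
  finally show "Hk_diag k W s \<in> Hk_closed_span k ((\<lambda>h. rep_k k \<pi> h \<eta>) ` carrier G)"
    unfolding cyclic_subspace_def .
qed

lemma resid_entry_cyclic_subspace_commutant:
  assumes j: "j < k"
  shows "Hk_subspace.resid_entry k (cyclic_subspace k G \<pi> \<eta>) i j \<in> commutant (\<pi> ` carrier G)"
proof -
  interpret C: Hk_subspace k "cyclic_subspace k G \<pi> \<eta>" by (rule Hk_subspace_cyclic_subspace)
  show ?thesis
    by (auto intro!: commutant_memI C.resid_entry_bounded[OF j] C.resid_entry_commute[OF j]
        rep_clinear cinner_rep_adjoint cyclic_subspace_Hk_diag_invariant)
qed

lemma Hk_trunc_mem_cyclic_subspace: "Hk_trunc k \<eta> \<in> cyclic_subspace k G \<pi> \<eta>"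
proof -
  interpret C: Hk_subspace k "cyclic_subspace k G \<pi> \<eta>" by (rule Hk_subspace_cyclic_subspace)
  define m where "m = rep_multiplier G \<pi> \<one> \<one>"
  have "cnj m * m = 1" unfolding m_def by (rule cnj_mult_self_eq_1[OF rep_multiplier_norm]) simp_all
  then have "Hk_trunc k \<eta> = Hk_scaleC (cnj m) (rep_k k \<pi> \<one> \<eta>)"
    unfolding Hk_scaleC_def rep_k_def Hk_trunc_def
    by (auto simp: fun_eq_iff rep_one m_def[symmetric] scaleC_scaleC scaleC_one)
  also have "\<dots> \<in> cyclic_subspace k G \<pi> \<eta>" by (intro C.scaleC_mem rep_k_mem_cyclic_subspace) simp
  finally show ?thesis .
qed

lemma cyclic_subspace_subset:
  assumes "Hk_trunc k \<xi> \<in> cyclic_subspace k G \<pi> \<eta>"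
  shows "cyclic_subspace k G \<pi> \<xi> \<subseteq> cyclic_subspace k G \<pi> \<eta>"
proof -
  have "(\<lambda>g. rep_k k \<pi> g \<xi>) ` carrier G \<subseteq> cyclic_subspace k G \<pi> \<eta>"
    using cyclic_subspace_Hk_diag_invariant[OF _ _ assms] by (auto simp: rep_k_eq_Hk_diag_trunc)
  then show ?thesis unfolding cyclic_subspace_def[of k G \<pi> \<xi>]
    by (rule Hk_closed_span_least[OF Hk_subspace_cyclic_subspace])
qed

end

section \<open>Contractions commuting with the commutant of \<open>\<pi>(G)\<close>\<close>

lemma Theta_vec_square_summable:
  assumes "j < k" "bessel_vector G \<pi> (\<zeta> j)"
  shows "square_summable (Theta_vec k G \<pi> \<zeta> x j) (carrier G)"
proof -
  obtain B where "bessel_family (carrier G) (\<lambda>g. \<pi> g (\<zeta> j)) B"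
    using assms(2) by (rule bessel_vectorE)
  from bessel_family_summable[OF this, of x] show ?thesis
    by (rule square_summable_cong_cmod) (simp add: Theta_vec_def assms(1))
qed

lemma Theta_vec_row_dist:
  assumes j: "j < k" and B: "bessel_family (carrier G) (\<lambda>g. \<pi> g (\<zeta> j)) B"
  shows "sqrt (\<Sum>\<^sub>\<infinity>g\<in>carrier G. (cmod (Theta_vec k G \<pi> \<zeta> x j g - Theta_vec k G \<pi> \<zeta> x' j g))\<^sup>2)
    \<le> sqrt B * norm (x - x')"
proof -
  have "(\<Sum>\<^sub>\<infinity>g\<in>carrier G. (cmod (Theta_vec k G \<pi> \<zeta> x j g - Theta_vec k G \<pi> \<zeta> x' j g))\<^sup>2)
      = (\<Sum>\<^sub>\<infinity>g\<in>carrier G. (cmod (cinner (x - x') (\<pi> g (\<zeta> j))))\<^sup>2)"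
    by (rule infsum_cong) (simp add: Theta_vec_def j cinner_diff_left)
  also have "\<dots> \<le> B * (norm (x - x'))\<^sup>2" by (rule bessel_family_bound[OF B])
  finally have "sqrt (\<Sum>\<^sub>\<infinity>g\<in>carrier G. (cmod (Theta_vec k G \<pi> \<zeta> x j g - Theta_vec k G \<pi> \<zeta> x' j g))\<^sup>2)
      \<le> sqrt (B * (norm (x - x'))\<^sup>2)" by (rule real_sqrt_le_mono)
  then show ?thesis by (simp add: real_sqrt_mult)
qed

lemma Theta_vec_mem_l2k_closed_span:
  assumes "\<forall>j<k. bessel_vector G \<pi> (\<zeta> j)"
  shows "Theta_vec k G \<pi> \<zeta> x \<in> l2k_closed_span k G (Theta_vec k G \<pi> \<zeta> ` UNIV)"
  unfolding l2k_closed_span_def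
proof (intro CollectI conjI allI impI)
  show "l2k k G (Theta_vec k G \<pi> \<zeta> x)"
    using Theta_vec_square_summable[of _ k G \<pi> \<zeta> x] assms
    unfolding l2k_def square_summable_def by (auto simp: Theta_vec_def)
  fix e :: real assume "e > 0"
  moreover have "Theta_vec k G \<pi> \<zeta> x \<in> l2k_span (Theta_vec k G \<pi> \<zeta> ` UNIV)"
    unfolding l2k_span_def
    by (intro CollectI exI[of _ "{Theta_vec k G \<pi> \<zeta> x}"] exI[of _ "\<lambda>_. 1"]) auto
  ultimately show "\<exists>h\<in>l2k_span (Theta_vec k G \<pi> \<zeta> ` UNIV). l2k_dist2 k G (Theta_vec k G \<pi> \<zeta> x) h < e"
    by (intro bexI[of _ "Theta_vec k G \<pi> \<zeta> x"]) (auto simp: l2k_dist2_def)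
qed

lemma l2k_span_square_summable:
  assumes "h \<in> l2k_span S" "\<And>a. a \<in> S \<Longrightarrow> square_summable (a j) I"
  shows "square_summable (h j) I"
  using assms unfolding l2k_span_def by (auto intro!: square_summable_lincomb)

lemma bessel_family_mono:
  assumes "bessel_family I \<phi> B" "B \<le> B'"
  shows "bessel_family I \<phi> B'"
  unfolding bessel_family_def
proof (intro conjI allI)
  show "0 \<le> B'" using bessel_family_nonneg[OF assms(1)] assms(2) by linarith
  show "square_summable (\<lambda>g. cinner z (\<phi> g)) I" for z by (rule bessel_family_summable[OF assms(1)])
  show "(\<Sum>\<^sub>\<infinity>g\<in>I. (cmod (cinner z (\<phi> g)))\<^sup>2) \<le> B' * (norm z)\<^sup>2" for z
    using bessel_family_bound[OF assms(1), of z] assms(2) by (smt (verit) mult_right_mono zero_le_power2)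
qed

lemma bessel_vectors_common_bound:
  fixes \<zeta> :: "nat \<Rightarrow> 'h::complex_inner"
  assumes "\<forall>j<k. bessel_vector G \<pi> (\<zeta> j)"
  obtains B where "0 \<le> B" "\<And>j. j < k \<Longrightarrow> bessel_family (carrier G) (\<lambda>g. \<pi> g (\<zeta> j)) B"
proof -
  have "\<forall>j. \<exists>B. j < k \<longrightarrow> bessel_family (carrier G) (\<lambda>g. \<pi> g (\<zeta> j)) B"
    using assms by (auto elim: bessel_vectorE)
  then obtain Bj where Bj: "\<And>j. j < k \<Longrightarrow> bessel_family (carrier G) (\<lambda>g. \<pi> g (\<zeta> j)) (Bj j)"
    by metis
  show ?thesis
  proof (rule that)
    show "0 \<le> (\<Sum>i<k. Bj i)" by (intro sum_nonneg) (auto intro: bessel_family_nonneg[OF Bj])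
    fix j assume j: "j < k"
    have "Bj j \<le> (\<Sum>i<k. Bj i)"
      using j by (intro member_le_sum) (auto intro: bessel_family_nonneg[OF Bj])
    then show "bessel_family (carrier G) (\<lambda>g. \<pi> g (\<zeta> j)) (\<Sum>i<k. Bj i)"
      by (rule bessel_family_mono[OF Bj[OF j]])
  qed
qed

locale commuting_contractions = group_proj_rep G \<pi>
  for G :: "('g, 'b) monoid_scheme" (structure) and \<pi> :: "'g \<Rightarrow> 'h::{complex_inner,complete_space} \<Rightarrow> 'h" +
  fixes k :: nat and Q :: "nat \<Rightarrow> 'h \<Rightarrow> 'h"
  assumes Q_clinear: "j < k \<Longrightarrow> clinear (Q j)"
    and Q_contraction: "j < k \<Longrightarrow> norm (Q j x) \<le> norm x"
    and Q_commute: "T \<in> commutant (\<pi> ` carrier G) \<Longrightarrow> j < k \<Longrightarrow> T (Q j z) = Q j (T z)"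
begin

definition Q_synthesis :: "'h \<Rightarrow> (nat \<Rightarrow> 'g \<Rightarrow> complex) \<Rightarrow> 'h" where
  "Q_synthesis y a = (\<Sum>j<k. Q j (rev_synthesis G \<pi> y (a j)))"

lemma Q_synthesis_Theta_vec:
  assumes x: "bessel_family (carrier G) (\<lambda>g. \<pi> g x) Bx" and y: "bessel_family (carrier G) (\<lambda>g. \<pi> g y) By"
  shows "Q_synthesis y (Theta_vec k G \<pi> \<zeta> x) = cross_frame_op G \<pi> x y (\<Sum>j<k. Q j (\<zeta> j))"
proof -
  have "cross_frame_op G \<pi> x y (\<Sum>j<k. Q j (\<zeta> j)) = (\<Sum>j<k. cross_frame_op G \<pi> x y (Q j (\<zeta> j)))"
    by (rule clinear_sum[OF cross_frame_op_clinear[OF y x]])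
  also have "\<dots> = (\<Sum>j<k. Q j (cross_frame_op G \<pi> x y (\<zeta> j)))"
    by (intro sum.cong refl Q_commute cross_frame_op_commutant[OF y x]) auto
  also have "\<dots> = Q_synthesis y (Theta_vec k G \<pi> \<zeta> x)"
    unfolding Q_synthesis_def cross_frame_op_eq_rev_synthesis
    by (intro sum.cong refl arg_cong[where f="Q _"] rev_synthesis_cong) (auto simp: Theta_vec_def)
  finally show ?thesis by simp
qed

lemma Q_synthesis_dist:
  assumes y: "bessel_family (carrier G) (\<lambda>g. \<pi> g y) By"
    and a: "\<And>j. j < k \<Longrightarrow> square_summable (a j) (carrier G)"
    and b: "\<And>j. j < k \<Longrightarrow> square_summable (b j) (carrier G)"
  shows "norm (Q_synthesis y a - Q_synthesis y b)
    \<le> sqrt By * (\<Sum>j<k. sqrt (\<Sum>\<^sub>\<infinity>g\<in>carrier G. (cmod (a j g - b j g))\<^sup>2))"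
proof -
  have "Q_synthesis y a - Q_synthesis y b = (\<Sum>j<k. Q j (rev_synthesis G \<pi> y (\<lambda>g. a j g - b j g)))"
    unfolding Q_synthesis_def sum_subtractf[symmetric]
    by (intro sum.cong refl) (simp add: rev_synthesis_diff[OF y] a b clinear_diff[OF Q_clinear])
  also have "norm \<dots> \<le> (\<Sum>j<k. norm (Q j (rev_synthesis G \<pi> y (\<lambda>g. a j g - b j g))))"
    by (rule norm_sum)
  also have "\<dots> \<le> (\<Sum>j<k. sqrt By * sqrt (\<Sum>\<^sub>\<infinity>g\<in>carrier G. (cmod (a j g - b j g))\<^sup>2))"
    using Q_contraction rev_synthesis_norm[OF y square_summable_diff[OF a b]]
    by (intro sum_mono) (meson lessThan_iff order_trans)
  finally show ?thesis by (simp add: sum_distrib_left)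
qed

lemma Q_synthesis_Theta_vec_lipschitz:
  assumes \<eta>: "\<forall>j<k. bessel_vector G \<pi> (\<eta> j)" and y: "bessel_family (carrier G) (\<lambda>g. \<pi> g y) By"
  obtains M where "0 \<le> M"
    "\<And>x x'. norm (Q_synthesis y (Theta_vec k G \<pi> \<eta> x) - Q_synthesis y (Theta_vec k G \<pi> \<eta> x')) \<le> M * norm (x - x')"
proof -
  obtain B where B0: "0 \<le> B" and B: "\<And>j. j < k \<Longrightarrow> bessel_family (carrier G) (\<lambda>g. \<pi> g (\<eta> j)) B"
    using bessel_vectors_common_bound[OF \<eta>] by blast
  show ?thesis
  proof (rule that[of "sqrt By * (real k * sqrt B)"])
    show "0 \<le> sqrt By * (real k * sqrt B)" using bessel_family_nonneg[OF y] B0 by simp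
    fix x x'
    have "norm (Q_synthesis y (Theta_vec k G \<pi> \<eta> x) - Q_synthesis y (Theta_vec k G \<pi> \<eta> x'))
        \<le> sqrt By * (\<Sum>j<k. sqrt (\<Sum>\<^sub>\<infinity>g\<in>carrier G.
          (cmod (Theta_vec k G \<pi> \<eta> x j g - Theta_vec k G \<pi> \<eta> x' j g))\<^sup>2))"
      using \<eta> by (intro Q_synthesis_dist[OF y] Theta_vec_square_summable) auto
    also have "\<dots> \<le> sqrt By * (\<Sum>j<k. sqrt B * norm (x - x'))"
      by (intro mult_left_mono sum_mono Theta_vec_row_dist B) (auto simp: bessel_family_nonneg[OF y])
    finally show "norm (Q_synthesis y (Theta_vec k G \<pi> \<eta> x) - Q_synthesis y (Theta_vec k G \<pi> \<eta> x'))
        \<le> sqrt By * (real k * sqrt B) * norm (x - x')" by (simp add: ac_simps)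
  qed
qed

text \<open>Since \<open>\<Sum>\<^sub>j Q\<^sub>j \<eta>\<^sub>j = 0\<close>, \<open>Q_synthesis y\<close> vanishes at \<open>\<Theta>\<^sub>\<eta>(x)\<close> for Bessel \<open>x\<close>
  by the identity above, hence for all \<open>x\<close> by density and continuity.\<close>
lemma Q_synthesis_Theta_vec_eq_0:
  assumes dense: "closure {x. bessel_vector G \<pi> x} = UNIV"
    and \<eta>: "\<forall>j<k. bessel_vector G \<pi> (\<eta> j)" and Q\<eta>: "(\<Sum>j<k. Q j (\<eta> j)) = 0"
    and y: "bessel_family (carrier G) (\<lambda>g. \<pi> g y) By"
  shows "Q_synthesis y (Theta_vec k G \<pi> \<eta> x) = 0"
proof -
  obtain M where M: "0 \<le> M"
    "\<And>x x'. norm (Q_synthesis y (Theta_vec k G \<pi> \<eta> x) - Q_synthesis y (Theta_vec k G \<pi> \<eta> x')) \<le> M * norm (x - x')"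
    using Q_synthesis_Theta_vec_lipschitz[OF \<eta> y] by blast
  show ?thesis
  proof (rule eq_0_if_norm_le_all_pos[OF M(1)])
    fix e :: real assume "e > 0"
    then have "\<exists>x'. bessel_vector G \<pi> x' \<and> dist x' x < e"
      using closure_approachable[of x "{x. bessel_vector G \<pi> x}"] dense by simp
    then obtain x' Bx' where x': "bessel_family (carrier G) (\<lambda>g. \<pi> g x') Bx'" "dist x' x < e"
      by (auto elim: bessel_vectorE)
    have "Q_synthesis y (Theta_vec k G \<pi> \<eta> x') = 0"
      using Q_synthesis_Theta_vec[OF x'(1) y, of \<eta>] Q\<eta>
        clinear_zero[OF cross_frame_op_clinear[OF y x'(1)]] by simp
    then have "norm (Q_synthesis y (Theta_vec k G \<pi> \<eta> x)) \<le> M * norm (x - x')"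
      using M(2)[of x x'] by simp
    also have "\<dots> \<le> M * e"
      using x'(2) M(1) by (intro mult_left_mono) (auto simp: dist_norm norm_minus_commute)
    finally show "norm (Q_synthesis y (Theta_vec k G \<pi> \<eta> x)) \<le> M * e" .
  qed
qed

lemma Q_synthesis_l2k_span_eq_0:
  assumes y: "bessel_family (carrier G) (\<lambda>g. \<pi> g y) By"
    and S: "\<And>a j. a \<in> S \<Longrightarrow> j < k \<Longrightarrow> square_summable (a j) (carrier G)"
    and S0: "\<And>a. a \<in> S \<Longrightarrow> Q_synthesis y a = 0"
    and h: "h \<in> l2k_span S"
  shows "Q_synthesis y h = 0"
proof -
  obtain A c where A: "finite A" "A \<subseteq> S" "h = (\<lambda>i g. \<Sum>v\<in>A. c v * v i g)"
    using h unfolding l2k_span_def by blast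
  have "Q_synthesis y h = (\<Sum>j<k. Q j (\<Sum>v\<in>A. scaleC (cnj (c v)) (rev_synthesis G \<pi> y (v j))))"
    unfolding Q_synthesis_def A(3)
    by (intro sum.cong refl arg_cong[where f="Q _"] rev_synthesis_lincomb[OF y A(1)]) (use A(2) S in auto)
  also have "\<dots> = (\<Sum>v\<in>A. scaleC (cnj (c v)) (Q_synthesis y v))"
    unfolding Q_synthesis_def
    by (simp add: clinear_sum[OF Q_clinear] clinear_scaleC[OF Q_clinear] scaleC_sum_right sum.swap[of _ A])
  also have "\<dots> = 0" using A(2) S0 by (simp add: subset_iff)
  finally show ?thesis .
qed

lemma Q_synthesis_l2k_closed_span_eq_0:
  assumes y: "bessel_family (carrier G) (\<lambda>g. \<pi> g y) By"
    and S: "\<And>a j. a \<in> S \<Longrightarrow> j < k \<Longrightarrow> square_summable (a j) (carrier G)"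
    and S0: "\<And>a. a \<in> S \<Longrightarrow> Q_synthesis y a = 0"
    and f: "f \<in> l2k_closed_span k G S"
  shows "Q_synthesis y f = 0"
proof (rule eq_0_if_norm_le_all_pos)
  show "0 \<le> sqrt By * real k" using bessel_family_nonneg[OF y] by simp
  fix e :: real assume "e > 0"
  then have "e\<^sup>2 > 0" by simp
  then obtain h where h: "h \<in> l2k_span S" "l2k_dist2 k G f h < e\<^sup>2"
    using f unfolding l2k_closed_span_def by blast
  have f_rows: "square_summable (f j) (carrier G)" if "j < k" for j
    using f that unfolding l2k_closed_span_def l2k_def square_summable_def by blast
  have h_rows: "square_summable (h j) (carrier G)" if "j < k" for j
    by (rule l2k_span_square_summable[OF h(1)], rule S, assumption, rule that)
  have "norm (Q_synthesis y f) = norm (Q_synthesis y f - Q_synthesis y h)"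
    by (simp add: Q_synthesis_l2k_span_eq_0[OF y _ _ h(1)] S S0)
  also have "\<dots> \<le> sqrt By * (\<Sum>j<k. sqrt (\<Sum>\<^sub>\<infinity>g\<in>carrier G. (cmod (f j g - h j g))\<^sup>2))"
    by (rule Q_synthesis_dist[OF y f_rows h_rows])
  also have "\<dots> \<le> sqrt By * (\<Sum>j<k. e)"
  proof (intro mult_left_mono sum_mono real_le_lsqrt)
    fix j assume "j \<in> {..<k}"
    then have "(\<Sum>\<^sub>\<infinity>g\<in>carrier G. (cmod (f j g - h j g))\<^sup>2) \<le> l2k_dist2 k G f h"
      unfolding l2k_dist2_def by (intro member_le_sum) (auto intro: infsum_nonneg)
    with h(2) show "(\<Sum>\<^sub>\<infinity>g\<in>carrier G. (cmod (f j g - h j g))\<^sup>2) \<le> e\<^sup>2" by simp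
  qed (use \<open>e > 0\<close> bessel_family_nonneg[OF y] in auto)
  finally show "norm (Q_synthesis y f) \<le> sqrt By * real k * e" by simp
qed

text \<open>The vector \<open>w = \<Sum>\<^sub>j Q\<^sub>j \<xi>\<^sub>j\<close> satisfies \<open>\<Theta>\<^sub>y\<^sup>* \<Theta>\<^sub>x w = Q_synthesis y (\<Theta>\<^sub>\<xi>(x)) = 0\<close> for all
  Bessel \<open>x\<close>, \<open>y\<close>; taking \<open>y = x\<close> makes \<open>w\<close> orthogonal to the dense set of Bessel vectors.\<close>
theorem sum_eq_0_if_Theta_closed_span_subset:
  assumes dense: "closure {x. bessel_vector G \<pi> x} = UNIV"
    and \<xi>: "\<forall>j<k. bessel_vector G \<pi> (\<xi> j)" and \<eta>: "\<forall>j<k. bessel_vector G \<pi> (\<eta> j)"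
    and span: "l2k_closed_span k G (Theta_vec k G \<pi> \<xi> ` UNIV) \<subseteq> l2k_closed_span k G (Theta_vec k G \<pi> \<eta> ` UNIV)"
    and Q\<eta>: "(\<Sum>j<k. Q j (\<eta> j)) = 0"
  shows "(\<Sum>j<k. Q j (\<xi> j)) = 0"
proof (rule eq_0_if_orthogonal_to_dense[OF dense])
  fix x assume "x \<in> {x. bessel_vector G \<pi> x}"
  then obtain B where x: "bessel_family (carrier G) (\<lambda>g. \<pi> g x) B"
    by (auto elim: bessel_vectorE)
  have \<Theta>\<xi>: "Theta_vec k G \<pi> \<xi> x \<in> l2k_closed_span k G (Theta_vec k G \<pi> \<eta> ` UNIV)"
    using span Theta_vec_mem_l2k_closed_span[OF \<xi>] by blast
  have "cross_frame_op G \<pi> x x (\<Sum>j<k. Q j (\<xi> j)) = Q_synthesis x (Theta_vec k G \<pi> \<xi> x)"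
    by (rule Q_synthesis_Theta_vec[OF x x, symmetric])
  also have "\<dots> = 0"
  proof (rule Q_synthesis_l2k_closed_span_eq_0[OF x _ _ \<Theta>\<xi>])
    show "square_summable (a j) (carrier G)" if "a \<in> Theta_vec k G \<pi> \<eta> ` UNIV" "j < k" for a j
      using that \<eta> Theta_vec_square_summable by blast
    show "Q_synthesis x a = 0" if "a \<in> Theta_vec k G \<pi> \<eta> ` UNIV" for a
      using that Q_synthesis_Theta_vec_eq_0[OF dense \<eta> Q\<eta> x] by blast
  qed
  finally show "cinner (\<Sum>j<k. Q j (\<xi> j)) x = 0"
    by (rule cinner_eq_0_if_cross_frame_op_self_eq_0[OF x])
qed

end

lemma cyclic_subspace_mono:
  fixes \<pi> \<sigma> :: "'g \<Rightarrow> 'h::{complex_inner, complete_space} \<Rightarrow> 'h"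
  assumes G: "group G"
    and \<pi>: "proj_unitary_rep G \<pi>" and \<sigma>: "proj_unitary_rep G \<sigma>"
    and pair: "commutant_pair G \<pi> \<sigma>"
    and dense: "closure {x. bessel_vector G \<pi> x} = UNIV"
    and \<xi>: "\<forall>j<k. bessel_vector G \<pi> (\<xi> j)" and \<eta>: "\<forall>j<k. bessel_vector G \<pi> (\<eta> j)"
    and span: "l2k_closed_span k G (Theta_vec k G \<pi> \<xi> ` UNIV) \<subseteq> l2k_closed_span k G (Theta_vec k G \<pi> \<eta> ` UNIV)"
  shows "cyclic_subspace k G \<sigma> \<xi> \<subseteq> cyclic_subspace k G \<sigma> \<eta>"
proof -
  interpret \<sigma>: group_proj_rep G \<sigma> using G \<sigma> by (rule group_proj_rep.intro[OF _ group_proj_rep_axioms.intro])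
  interpret \<pi>: group_proj_rep G \<pi> using G \<pi> by (rule group_proj_rep.intro[OF _ group_proj_rep_axioms.intro])
  define C where "C = cyclic_subspace k G \<sigma> \<eta>"
  interpret C: Hk_subspace k C unfolding C_def by (rule \<sigma>.Hk_subspace_cyclic_subspace)
  have "(\<Sum>j<k. C.resid_entry i j (\<xi> j)) = 0" for i
  proof -
    interpret Q: commuting_contractions G \<pi> k "C.resid_entry i"
    proof
      show "T (C.resid_entry i j z) = C.resid_entry i j (T z)"
        if "T \<in> commutant (\<pi> ` carrier G)" "j < k" for T j z
        using that pair commutant_commute \<sigma>.resid_entry_cyclic_subspace_commutant
        unfolding commutant_pair_def C_def by blast
    qed (auto intro: C.resid_entry_clinear C.resid_entry_contraction)
    have "Hk_trunc k \<eta> \<in> C" unfolding C_def by (rule \<sigma>.Hk_trunc_mem_cyclic_subspace)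
    then have "(\<Sum>j<k. C.resid_entry i j (\<eta> j)) = 0"
      using C.mem_iff_resid_entries_eq_0[OF Hk_trunc_mem] by (simp add: Hk_trunc_def)
    then show ?thesis by (rule Q.sum_eq_0_if_Theta_closed_span_subset[OF dense \<xi> \<eta> span])
  qed
  then have "Hk_trunc k \<xi> \<in> C"
    using C.mem_iff_resid_entries_eq_0[OF Hk_trunc_mem] by (simp add: Hk_trunc_def)
  then show ?thesis unfolding C_def by (rule \<sigma>.cyclic_subspace_subset)
qed

theorem lemma3p6:
  fixes G :: "('g, 'b) monoid_scheme"
    and \<pi> \<sigma> :: "'g \<Rightarrow> 'h::{complex_inner, complete_space} \<Rightarrow> 'h"
    and k :: nat
    and \<xi> \<eta> :: "nat \<Rightarrow> 'h"
  assumes "group G"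
    and "countable (carrier G)"
    and "proj_unitary_rep G \<pi>"
    and "proj_unitary_rep G \<sigma>"
    and "commutant_pair G \<pi> \<sigma>"
    and "closure {x. bessel_vector G \<pi> x} = UNIV"
    and "\<forall>i<k. bessel_vector G \<pi> (\<xi> i)"
    and "\<forall>i<k. bessel_vector G \<pi> (\<eta> i)"
    and "l2k_closed_span k G (Theta_vec k G \<pi> \<xi> ` UNIV) = l2k_closed_span k G (Theta_vec k G \<pi> \<eta> ` UNIV)"
  shows "Hk_closed_span k ((\<lambda>g. rep_k k \<sigma> g \<xi>) ` carrier G) = Hk_closed_span k ((\<lambda>g. rep_k k \<sigma> g \<eta>) ` carrier G)"
  using cyclic_subspace_mono[OF assms(1,3-8)] cyclic_subspace_mono[OF assms(1,3-6,8,7)] assms(9)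
  unfolding cyclic_subspace_def by blast

end
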